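(* For every $\varepsilon>0$ there exist numbers $\gamma_*>0$, $\Delta_*>0$, $\delta_*>0$, $\sigma_*>0$ with the following property. Let $\Delta\in(0,\Delta_* )$ and let $\{\Omega_1,\dots,\Omega_N\}$ be any finite $\Delta$-partition of $\Omega$. Let $\Lambda_*=\{0=z_0<\dots<z_a=\gamma_*\}$ be any uniform partition of $[0,\gamma_*]$ whose step $\delta=\gamma_*/a$ satisfies $\delta\in(0,\delta_* )$. Let $\sigma\in(0,\sigma_* )$ and let $E_\sigma$ be any finite $\sigma$-net on the unit sphere $E=\{x\in\mathbb{R}^n:\|x\|=1\}$. Then $$h_q\big(\mathcal{F}_p(r),\mathcal{F}_p^{\gamma_*,\Delta,\delta,\sigma}(r)\big)\le\varepsilon.$$
   Context: Let $k,m,n\ge 1$ be integers and let $\Omega\subset\mathbb{R}^k$ be a compact set. Let $\mu$ denote Lebesgue measure. Let $p>1$, let $q$ satisfy $1/p+1/q=1$, and let $r>0$. Throughout, $\|\cdot\|$ denotes the Euclidean norm on vectors and the Euclidean (Frobenius) norm on $m\times n$ matrices. $L_p(\Omega;\mathbb{R}^n)$ is the space of Lebesgue measurable $x:\Omega\to\mathbb{R}^n$ with $\|x\|_p=(\int_\Omega\|x(s)\|^p\,ds)^{1/p}<\infty$. Set $B_p(r)=\{x\in L_p(\Omega;\mathbb{R}^n):\|x\|_p\le r\}$. For $U,V\subset L_q(\Omega;\mathbb{R}^m)$, $h_q(U,V)$ denotes the Hausdorff distance $\max\{\sup_{u\in U}\inf_{v\in V}\|u-v\|_q,\ \sup_{v\in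 V}\inf_{u\in U}\|u-v\|_q\}$. $K:\Omega\times\Omega\to\mathbb{R}^{m\times n}$ is Lebesgue measurable with $\int_\Omega\int_\Omega\|K(\xi,s)\|^q\,d\xi\,ds<\infty$. The operator is $F(x)(\xi)=\int_\Omega K(\xi,s)x(s)\,ds$ for a.e. $\xi\in\Omega$, and $\mathcal{F}_p(r)=\{F(x):x\in B_p(r)\}$. A finite $\Delta$-partition of $\Omega$ is a finite family $\{\Omega_1,\dots,\Omega_N\}$ of pairwise disjoint Lebesgue measurable subsets of $\Omega$ whose union is $\Omega$, with $\operatorname{diam}(\Omega_i)\le\Delta$ for each $i$. A finite $\sigma$-net on $E$ is a finite set $E_\sigma\subset E$ such that every point of $E$ lies within distance $\sigma$ of some point of $E_\sigma$. Given such a partition $\{\Omega_i\}$, a uniform partition $\Lambda_*$ of $[0,\gamma]$ with step $\delta$, and a finite $\sigma$-net $E_\sigma$, define $$B_p^{\gamma,\Delta,\delta,\sigma}(r)=\Big\{x:\Omega\to\mathbb{R}^n:\ x(\xi)=z_{j_i}e_{l_i}\text{ for all }\xi\in\Omega_i,\ \text{where } z_{j_i}\in\Lambda_*,\ e_{l_i}\in E_\sigma,\ \sum_{i=1}^N\mu(\Omega_i)z_{j_i}^p\le r^p\Big\}$$ and $\mathcal{F}_p^{\gamma,\Delta,\delta,\sigma}(r)=\{F(x):x\in B_p^{\gamma,\Delta,\delta,\sigma}(r)\}$. *)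

theory Defs
  imports "HOL-Analysis.Analysis"
begin

definition in_Lp :: "real \<Rightarrow> ('a::euclidean_space) set \<Rightarrow> ('a \<Rightarrow> 'b::euclidean_space) \<Rightarrow> bool" where
  "in_Lp p \<Omega> x \<longleftrightarrow> x \<in> borel_measurable (lebesgue_on \<Omega>)
     \<and> integrable (lebesgue_on \<Omega>) (\<lambda>s. norm (x s) powr p)"

definition Lp_norm :: "real \<Rightarrow> ('a::euclidean_space) set \<Rightarrow> ('a \<Rightarrow> 'b::euclidean_space) \<Rightarrow> real" where
  "Lp_norm p \<Omega> x = (integral\<^sup>L (lebesgue_on \<Omega>) (\<lambda>s. norm (x s) powr p)) powr (1 / p)"

definition Bp :: "real \<Rightarrow> ('a::euclidean_space) set \<Rightarrow> real \<Rightarrow> ('a \<Rightarrow> 'b::euclidean_space) set" where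
  "Bp p \<Omega> r = {x. in_Lp p \<Omega> x \<and> Lp_norm p \<Omega> x \<le> r}"

text \<open>Hausdorff distance in L_q (as an extended real, so that suprema are always meaningful).\<close>
definition hausdorff_Lq :: "real \<Rightarrow> ('a::euclidean_space) set \<Rightarrow> ('a \<Rightarrow> 'b::euclidean_space) set
    \<Rightarrow> ('a \<Rightarrow> 'b) set \<Rightarrow> ereal" where
  "hausdorff_Lq q \<Omega> U V = max
     (SUP u\<in>U. INF v\<in>V. ereal (Lp_norm q \<Omega> (\<lambda>s. u s - v s)))
     (SUP v\<in>V. INF u\<in>U. ereal (Lp_norm q \<Omega> (\<lambda>s. u s - v s)))"

definition intop :: "('a::euclidean_space) set \<Rightarrow> ('a \<Rightarrow> 'a \<Rightarrow> real^'n^'m) \<Rightarrow> ('a \<Rightarrow> real^'n)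
    \<Rightarrow> ('a \<Rightarrow> real^'m)" where
  "intop \<Omega> K x = (\<lambda>\<xi>. integral\<^sup>L (lebesgue_on \<Omega>) (\<lambda>s. K \<xi> s *v x s))"

definition is_Delta_partition :: "('a::euclidean_space) set \<Rightarrow> real \<Rightarrow> 'a set set \<Rightarrow> bool" where
  "is_Delta_partition \<Omega> \<Delta> P \<longleftrightarrow> finite P \<and> disjoint P \<and> \<Union>P = \<Omega>
     \<and> (\<forall>A\<in>P. A \<in> sets lebesgue \<and> diameter A \<le> \<Delta>)"

definition is_finite_net :: "real \<Rightarrow> ('a::metric_space) set \<Rightarrow> 'a set \<Rightarrow> bool" where
  "is_finite_net \<sigma> E N \<longleftrightarrow> finite N \<and> N \<subseteq> E \<and> (\<forall>x\<in>E. \<exists>e\<in>N. dist x e \<le> \<sigma>)"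

definition unif_grid :: "real \<Rightarrow> nat \<Rightarrow> real set" where
  "unif_grid \<gamma> a = (\<lambda>j. real j * (\<gamma> / real a)) ` {0..a}"

definition Bp_disc :: "real \<Rightarrow> real \<Rightarrow> ('a::euclidean_space) set set \<Rightarrow> real set
    \<Rightarrow> ('b::real_normed_vector) set \<Rightarrow> ('a \<Rightarrow> 'b) set" where
  "Bp_disc p r P Lam Es = {x. \<exists>z e. (\<forall>A\<in>P. z A \<in> Lam \<and> e A \<in> Es \<and> (\<forall>\<xi>\<in>A. x \<xi> = z A *\<^sub>R e A))
       \<and> (\<Sum>A\<in>P. measure lebesgue A * z A powr p) \<le> r powr p}"

end

theory Submission
  imports Defs
begin

text \<open>Extend \<open>K\<close> by zero outside \<open>\<Omega> \<times> \<Omega>\<close> and approximate it in \<open>L\<^sub>q\<close> by a continuous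
  kernel \<open>G\<close>; by Hoelder, replacing \<open>K\<close> by \<open>G\<close> changes \<open>F x\<close> by little, uniformly on \<open>B\<^sub>p(r)\<close>.
  Given \<open>x \<in> B\<^sub>p(r)\<close>, let \<open>v\<^sub>i\<close> be the mean of \<open>x\<close> over the cell \<open>\<Omega>\<^sub>i\<close>, and let \<open>x\<^sub>d\<close> equal
  \<open>z\<^sub>i e\<^sub>i\<close> on \<open>\<Omega>\<^sub>i\<close>, where \<open>z\<^sub>i\<close> is \<open>min |v\<^sub>i| \<gamma>\<close> rounded down to the grid and \<open>e\<^sub>i\<close> is a net
  point next to the direction of \<open>v\<^sub>i\<close>. By Jensen \<open>\<Sum> \<mu>(\<Omega>\<^sub>i) z\<^sub>i\<^sup>p \<le> \<parallel>x\<parallel>\<^sub>p\<^sup>p \<le> r\<^sup>p\<close>, so \<open>x\<^sub>d\<close> is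
  admissible. Since \<open>G(\<xi>,\<cdot>)\<close> is almost constant on every cell, the \<open>G\<close>-part of
  \<open>F x - F x\<^sub>d\<close> is controlled by \<open>\<Sum> \<mu>(\<Omega>\<^sub>i) |v\<^sub>i - z\<^sub>i e\<^sub>i|\<close>, which is at most
  \<open>\<mu>(\<Omega>) (\<delta> + \<gamma> \<sigma>) + 2 r\<^sup>p / \<gamma>\<^sup>p\<^sup>-\<^sup>1\<close>: the last term pays for the cells where \<open>|v\<^sub>i| > \<gamma>\<close>.
  The reverse half of the Hausdorff distance vanishes because discrete inputs lie in \<open>B\<^sub>p(r)\<close>.\<close>

lemma conjugate_exponent_gt_one:
  fixes p q :: real
  assumes "p > 1" and "1/p + 1/q = 1"
  shows "q > 1"
proof -
  have "1/q = 1 - 1/p" using assms by simp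
  moreover have "0 < 1 - 1/p" "1 - 1/p < 1" using assms by auto
  ultimately have "0 < 1/q" "1/q < 1" by auto
  then show ?thesis by (smt (verit) divide_less_eq_1 zero_less_divide_1_iff)
qed

lemma nn_integral_mult_eq_0_if_powr:
  fixes f g :: "'a \<Rightarrow> real"
  assumes "f \<in> borel_measurable M" "\<And>x. 0 \<le> f x" "p > 0"
    and "(\<integral>\<^sup>+x. ennreal (f x powr p) \<partial>M) = 0"
  shows "(\<integral>\<^sup>+x. ennreal (f x * g x) \<partial>M) = 0"
proof -
  have "AE x in M. ennreal (f x powr p) = 0"
    using assms by (subst (asm) nn_integral_0_iff_AE) auto
  then have "AE x in M. ennreal (f x * g x) = 0"
    by eventually_elim (use assms in auto)
  then show ?thesis by (simp add: nn_integral_cong_AE)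
qed

lemma Young_weighted:
  fixes A B p q s t :: real
  assumes "A > 0" "B > 0" "0 \<le> s" "0 \<le> t" "p > 1" "q > 1" "1/p + 1/q = 1"
  shows "s * t \<le> A powr (1/p) * B powr (1/q) * (s powr p / (p * A) + t powr q / (q * B))"
proof -
  define a b where "a = A powr (1/p)" and "b = B powr (1/q)"
  have ab: "a > 0" "b > 0" using assms by (auto simp: a_def b_def)
  have "(s / a) * (t / b) \<le> (s / a) powr p / p + (t / b) powr q / q"
    by (rule Youngs_inequality) (use assms ab in auto)
  also have "\<dots> = s powr p / (p * A) + t powr q / (q * B)"
    using assms by (simp add: a_def b_def powr_divide powr_powr mult.commute)
  finally have "a * b * ((s / a) * (t / b)) \<le> a * b * (s powr p / (p * A) + t powr q / (q * B))"
    using ab by (intro mult_left_mono) auto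
  then show ?thesis using ab by (simp add: a_def b_def)
qed

lemma nn_integral_Holder_pos:
  fixes f g :: "'a \<Rightarrow> real"
  assumes fm: "f \<in> borel_measurable M" and gm: "g \<in> borel_measurable M"
    and f0: "\<And>x. 0 \<le> f x" and g0: "\<And>x. 0 \<le> g x"
    and p: "p > 1" and pq: "1/p + 1/q = 1"
    and A: "(\<integral>\<^sup>+x. ennreal (f x powr p) \<partial>M) \<le> ennreal A" and A0: "A > 0"
    and B: "(\<integral>\<^sup>+x. ennreal (g x powr q) \<partial>M) \<le> ennreal B" and B0: "B > 0"
  shows "(\<integral>\<^sup>+x. ennreal (f x * g x) \<partial>M) \<le> ennreal (A powr (1/p) * B powr (1/q))"
proof -
  have q: "q > 1" using conjugate_exponent_gt_one[OF p pq] .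
  define w where "w = A powr (1/p) * B powr (1/q)"
  define c d where "c = w / (p * A)" and "d = w / (q * B)"
  have cd: "c \<ge> 0" "d \<ge> 0" using A0 B0 p q by (auto simp: c_def d_def w_def)
  have "f x * g x \<le> c * f x powr p + d * g x powr q" for x
    using Young_weighted[OF A0 B0 f0 g0 p q pq] by (simp add: c_def d_def w_def field_simps)
  then have "(\<integral>\<^sup>+x. ennreal (f x * g x) \<partial>M) \<le>
      (\<integral>\<^sup>+x. ennreal c * ennreal (f x powr p) + ennreal d * ennreal (g x powr q) \<partial>M)"
    using cd by (intro nn_integral_mono)
      (simp add: ennreal_mult[symmetric] ennreal_plus[symmetric] ennreal_leI del: ennreal_plus)
  also have "\<dots> = ennreal c * (\<integral>\<^sup>+x. ennreal (f x powr p) \<partial>M) + ennreal d * (\<integral>\<^sup>+x. ennreal (g x powr q) \<partial>M)"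
    using fm gm by (subst nn_integral_add) (auto simp: nn_integral_cmult)
  also have "\<dots> \<le> ennreal c * ennreal A + ennreal d * ennreal B"
    by (intro add_mono mult_left_mono A B) auto
  also have "\<dots> = ennreal (c * A + d * B)"
    using cd A0 B0 by (simp add: ennreal_mult[symmetric] ennreal_plus[symmetric] del: ennreal_plus)
  also have "c * A + d * B = w * (1/p + 1/q)"
    using A0 B0 p q by (simp add: c_def d_def field_simps)
  finally show ?thesis using pq by (simp add: w_def)
qed

lemma nn_integral_Holder:
  fixes f g :: "'a \<Rightarrow> real"
  assumes fm: "f \<in> borel_measurable M" and gm: "g \<in> borel_measurable M"
    and f0: "\<And>x. 0 \<le> f x" and g0: "\<And>x. 0 \<le> g x"
    and p: "p > 1" and pq: "1/p + 1/q = 1"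
    and A: "(\<integral>\<^sup>+x. ennreal (f x powr p) \<partial>M) \<le> ennreal A"
    and B: "(\<integral>\<^sup>+x. ennreal (g x powr q) \<partial>M) \<le> ennreal B"
    and A0: "0 \<le> A" and B0: "0 \<le> B"
  shows "(\<integral>\<^sup>+x. ennreal (f x * g x) \<partial>M) \<le> ennreal (A powr (1/p) * B powr (1/q))"
proof -
  have q: "q > 1" using conjugate_exponent_gt_one[OF p pq] .
  consider "A = 0" | "B = 0" | "A > 0" "B > 0" using A0 B0 by linarith
  then show ?thesis
  proof cases
    case 1
    then show ?thesis using nn_integral_mult_eq_0_if_powr[OF fm f0, of p g] A p by simp
  next
    case 2
    then show ?thesis
      using nn_integral_mult_eq_0_if_powr[OF gm g0, of q f] B q by (simp add: mult.commute)
  qed (rule nn_integral_Holder_pos[OF fm gm f0 g0 p pq A _ B])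
qed

lemma norm_matrix_vector_mult_le: "norm (A *v x) \<le> norm (A::real^'n^'m) * norm (x::real^'n)"
proof -
  have row: "(A *v x) $ i = inner (A $ i) x" for i
    by (simp add: matrix_vector_mult_def inner_vec_def)
  have "norm (A *v x) = sqrt (\<Sum>i\<in>UNIV. (inner (A $ i) x)\<^sup>2)"
    by (simp add: norm_vec_def L2_set_def row)
  also have "\<dots> \<le> sqrt (\<Sum>i\<in>UNIV. (norm (A $ i))\<^sup>2 * (norm x)\<^sup>2)"
    by (intro real_sqrt_le_mono sum_mono)
      (metis Cauchy_Schwarz_ineq2 abs_ge_zero power2_abs power_mono power_mult_distrib)
  also have "\<dots> = norm A * norm x"
    by (simp add: norm_vec_def L2_set_def sum_distrib_right[symmetric] real_sqrt_mult abs_of_nonneg sum_nonneg)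
  finally show ?thesis .
qed

lemma integrable_const_matrix_mult:
  fixes C :: "real^'n^'m" and f :: "'a \<Rightarrow> real^'n"
  shows "integrable M f \<Longrightarrow> integrable M (\<lambda>s. C *v f s)"
  by (rule integrable_bounded_linear[OF matrix_vector_mul_bounded_linear])

lemma norm_integral_const_matrix_mult_le:
  fixes C :: "real^'n^'m" and f :: "'a \<Rightarrow> real^'n"
  assumes "integrable M f"
  shows "norm (integral\<^sup>L M (\<lambda>s. C *v f s)) \<le> norm C * norm (integral\<^sup>L M f)"
proof -
  have "integral\<^sup>L M (\<lambda>s. C *v f s) = C *v integral\<^sup>L M f"
    by (rule integral_bounded_linear[OF matrix_vector_mul_bounded_linear assms])
  then show ?thesis by (simp add: norm_matrix_vector_mult_le)
qed

lemma bilinear_matrix_vector_mult: "bilinear (\<lambda>(A::real^'n^'m) (v::real^'n). A *v v)"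
  unfolding bilinear_def
  by (auto intro!: linearI simp: matrix_vector_mult_add_rdistrib matrix_vector_right_distrib
      matrix_vector_mult_scaleR scaleR_matrix_vector_assoc)

lemma le_one_plus_powr: "0 \<le> t \<Longrightarrow> 1 \<le> p \<Longrightarrow> t \<le> 1 + t powr (p::real)"
proof (cases "t \<le> 1")
  case False
  assume "0 \<le> t" "1 \<le> p"
  then have "t powr 1 \<le> t powr p" using False by (intro powr_mono) auto
  then show ?thesis using False by simp
qed (use powr_ge_zero[of t p] in linarith)

lemma powr_add_le_two_powr:
  "0 \<le> a \<Longrightarrow> 0 \<le> b \<Longrightarrow> 0 < q \<Longrightarrow> (a + b) powr q \<le> 2 powr q * (a powr q + b powr (q::real))"
proof -
  assume a: "0 \<le> a" and b: "0 \<le> b" and q: "0 < q"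
  have "(a+b) powr q \<le> (2 * max a b) powr q"
    using a b q by (intro powr_mono2) auto
  also have "\<dots> = 2 powr q * max a b powr q" using a b by (simp add: powr_mult)
  also have "max a b powr q \<le> a powr q + b powr q"
    by (cases "a \<le> b") (auto simp: max_def)
  finally show ?thesis by (simp add: mult_left_mono)
qed

lemma powr_le_powr_minus_one_mult: "0 \<le> t \<Longrightarrow> t \<le> B \<Longrightarrow> 1 \<le> q \<Longrightarrow> t powr q \<le> B powr (q - 1) * (t::real)"
proof (cases "t = 0")
  case False
  assume "0 \<le> t" "t \<le> B" "1 \<le> q"
  then have "t powr q = t powr (q - 1) * t" using False powr_add[of t "q-1" 1] by simp
  also have "\<dots> \<le> B powr (q - 1) * t"
    using \<open>0 \<le> t\<close> \<open>t \<le> B\<close> \<open>1 \<le> q\<close> by (intro mult_right_mono powr_mono2) auto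
  finally show ?thesis .
qed simp

lemma nn_integral_lebesgue_on_eq:
  assumes "S \<in> sets lebesgue"
  shows "nn_integral (lebesgue_on S) h = (\<integral>\<^sup>+x. h x * indicator S x \<partial>lborel)"
  using assms by (simp add: nn_integral_restrict_space nn_integral_completion)

lemma integral_le_of_nn_integral_le:
  fixes h :: "'a \<Rightarrow> real"
  assumes "\<And>x. 0 \<le> h x" "(\<integral>\<^sup>+x. ennreal (h x) \<partial>M) \<le> ennreal B" "0 \<le> B"
  shows "integral\<^sup>L M h \<le> B"
proof (cases "integrable M h")
  case True
  then have "integral\<^sup>L M h = enn2real (\<integral>\<^sup>+x. ennreal (h x) \<partial>M)"
    using assms by (intro integral_eq_nn_integral) auto
  also have "\<dots> \<le> B" using assms
    by (metis enn2real_ennreal enn2real_mono ennreal_neq_top top.not_eq_extremum)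
  finally show ?thesis .
qed (use assms in \<open>simp add: not_integrable_integral_eq\<close>)

lemma Lp_norm_le_if_integral_powr_le:
  assumes "integral\<^sup>L (lebesgue_on \<Omega>) (\<lambda>s. norm (x s) powr p) \<le> r powr p" "p > 0" "r > 0"
  shows "Lp_norm p \<Omega> x \<le> r"
proof -
  have "0 \<le> integral\<^sup>L (lebesgue_on \<Omega>) (\<lambda>s. norm (x s) powr p)"
    by (intro integral_nonneg_AE) auto
  then have "Lp_norm p \<Omega> x \<le> (r powr p) powr (1/p)"
    unfolding Lp_norm_def using assms by (intro powr_mono2) auto
  also have "\<dots> = r" using assms by (simp add: powr_powr)
  finally show ?thesis .
qed

lemma unif_grid_nonneg: "0 \<le> \<gamma> \<Longrightarrow> unif_grid \<gamma> a \<subseteq> {0..}"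
  by (auto simp: unif_grid_def)

lemma hausdorff_Lq_image_le:
  assumes "B \<subseteq> A" and "0 \<le> \<epsilon>"
    and approx: "\<And>x. x \<in> A \<Longrightarrow> \<exists>y\<in>B. Lp_norm q \<Omega> (\<lambda>s. F x s - F y s) \<le> \<epsilon>"
  shows "hausdorff_Lq q \<Omega> (F ` A) (F ` B) \<le> ereal \<epsilon>"
proof -
  have "(INF v\<in>F ` B. ereal (Lp_norm q \<Omega> (\<lambda>s. F x s - v s))) \<le> ereal \<epsilon>" if x: "x \<in> A" for x
  proof -
    obtain y where "y \<in> B" "Lp_norm q \<Omega> (\<lambda>s. F x s - F y s) \<le> \<epsilon>" using approx[OF x] by blast
    then show ?thesis by (intro INF_lower2[of "F y"]) auto
  qed
  moreover have "(INF u\<in>F ` A. ereal (Lp_norm q \<Omega> (\<lambda>s. u s - F y s))) \<le> ereal \<epsilon>" if "y \<in> B" for y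
  proof -
    have "Lp_norm q \<Omega> (\<lambda>s. F y s - F y s) = 0" by (simp add: Lp_norm_def)
    then show ?thesis using that \<open>B \<subseteq> A\<close> \<open>0 \<le> \<epsilon>\<close> by (intro INF_lower2[of "F y"]) auto
  qed
  ultimately show ?thesis unfolding hausdorff_Lq_def by (auto intro!: SUP_least)
qed

definition radial_clip :: "real \<Rightarrow> 'a::real_normed_vector \<Rightarrow> 'a" where
  "radial_clip R v = (R / max R (norm v)) *\<^sub>R v"

lemma continuous_on_radial_clip: "R > 0 \<Longrightarrow> continuous_on UNIV (radial_clip R)"
  unfolding radial_clip_def[abs_def] by (intro continuous_intros) (auto simp: max_def)

lemma norm_radial_clip_le: "R > 0 \<Longrightarrow> norm (radial_clip R v) \<le> R"
  by (cases "norm v \<le> R") (auto simp: radial_clip_def max_def)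

lemma radial_clip_eq: "R > 0 \<Longrightarrow> norm v \<le> R \<Longrightarrow> radial_clip R v = v"
  by (auto simp: radial_clip_def max_def)

lemma norm_diff_radial_clip_le: "R > 0 \<Longrightarrow> norm (v - radial_clip R v) \<le> norm v"
proof -
  assume R: "R > 0"
  have "v - radial_clip R v = (1 - R / max R (norm v)) *\<^sub>R v" by (simp add: radial_clip_def algebra_simps)
  moreover have "0 \<le> 1 - R / max R (norm v)" "1 - R / max R (norm v) \<le> 1"
    using R by (auto simp: max_def divide_le_eq_1)
  ultimately show ?thesis by (simp add: mult_left_le_one_le)
qed

lemma borel_measurable_radial_clip: "R > 0 \<Longrightarrow> radial_clip R \<in> borel_measurable borel"
  using continuous_on_radial_clip by (rule borel_measurable_continuous_onI)

text \<open>Errors between values bounded by \<open>2R\<close> satisfy \<open>t\<^sup>q \<le> (2R)\<^sup>q\<^sup>-\<^sup>1 t\<close>, so after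
  truncation at radius \<open>R\<close> an \<open>L\<^sub>1\<close>-approximation is also an \<open>L\<^sub>q\<close>-approximation.\<close>

lemma norm_diff_radial_clip_powr_le:
  fixes v w :: "'a::real_normed_vector"
  assumes R: "R > 0" and q: "q \<ge> 1"
  shows "norm (v - radial_clip R w) powr q
    \<le> 2 powr q * norm (v - radial_clip R v) powr q
      + 2 powr q * (2 * R) powr (q - 1) * norm (radial_clip R v - radial_clip R w)"
proof -
  define a where "a = norm (v - radial_clip R v)"
  define b where "b = norm (radial_clip R v - radial_clip R w)"
  have "norm (v - radial_clip R w) \<le> a + b" unfolding a_def b_def
    by (metis norm_triangle_ineq diff_add_cancel add_diff_eq)
  then have "norm (v - radial_clip R w) powr q \<le> (a + b) powr q" using q by (intro powr_mono2) auto
  also have "\<dots> \<le> 2 powr q * (a powr q + b powr q)"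
    using q by (intro powr_add_le_two_powr) (auto simp: a_def b_def)
  also have "b powr q \<le> (2 * R) powr (q - 1) * b"
  proof -
    have "b \<le> norm (radial_clip R v) + norm (radial_clip R w)" unfolding b_def by (rule norm_triangle_ineq4)
    also have "\<dots> \<le> 2 * R" using norm_radial_clip_le[OF R, of v] norm_radial_clip_le[OF R, of w] by simp
    finally show ?thesis using q by (intro powr_le_powr_minus_one_mult) (auto simp: b_def)
  qed
  finally show ?thesis by (simp add: a_def b_def algebra_simps mult_left_mono)
qed

lemma sum_partition_indicator_scaleR:
  fixes f :: "'a set \<Rightarrow> 'b::real_vector"
  assumes "disjoint P" "A0 \<in> P" "s \<in> A0" "finite P"
  shows "(\<Sum>A\<in>P. indicator A s *\<^sub>R f A) = f A0"
proof -
  have "(\<Sum>A\<in>P. indicator A s *\<^sub>R f A) = indicator A0 s *\<^sub>R f A0 + (\<Sum>A\<in>P-{A0}. indicator A s *\<^sub>R f A)"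
    by (rule sum.remove) (use assms in auto)
  also have "(\<Sum>A\<in>P-{A0}. indicator A s *\<^sub>R f A) = 0"
  proof (intro sum.neutral ballI)
    fix A assume "A \<in> P - {A0}"
    then have "s \<notin> A" using assms by (auto dest: disjointD)
    then show "indicator A s *\<^sub>R f A = 0" by simp
  qed
  finally show ?thesis using assms by simp
qed

lemma sum_partition_indicator:
  fixes f :: "'a set \<Rightarrow> real"
  assumes "disjoint P" "A0 \<in> P" "s \<in> A0" "finite P"
  shows "(\<Sum>A\<in>P. indicator A s * f A) = f A0"
  using sum_partition_indicator_scaleR[OF assms, of f] by simp

lemma mult_powr_div_le_if_Holder:
  fixes m J v p q :: real
  assumes "0 < m" "0 \<le> J" "0 \<le> v" "p > 1" "1/p + 1/q = 1"
    and "v \<le> J powr (1/p) * m powr (1/q)"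
  shows "m * (v / m) powr p \<le> J"
proof -
  have "1/q = 1 - 1/p" using assms by simp
  then have "m powr (1/q) = m powr (1 - 1/p)" by simp
  also have "\<dots> = m / m powr (1/p)" using assms by (simp add: powr_diff)
  finally have "m powr (1/q) = m / m powr (1/p)" .
  then have "v / m \<le> J powr (1/p) / m powr (1/p)"
    using assms by (simp add: pos_divide_le_eq)
  also have "\<dots> = (J / m) powr (1/p)" using assms by (simp add: powr_divide)
  finally have "v / m \<le> (J / m) powr (1/p)" .
  then have "(v / m) powr p \<le> ((J / m) powr (1/p)) powr p"
    using assms by (intro powr_mono2) auto
  also have "\<dots> = J / m" using assms by (simp add: powr_powr)
  finally show ?thesis using assms by (simp add: field_simps)
qed

lemma le_powr_div_powr:
  "0 < \<gamma> \<Longrightarrow> \<gamma> \<le> t \<Longrightarrow> 1 \<le> p \<Longrightarrow> 2 * t \<le> 2 * t powr p / \<gamma> powr (p - 1::real)"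
proof -
  assume "0 < \<gamma>" "\<gamma> \<le> t" "1 \<le> p"
  then have "\<gamma> powr (p - 1) \<le> t powr (p - 1)" by (intro powr_mono2) auto
  then have "t * \<gamma> powr (p - 1) \<le> t * t powr (p - 1)" using \<open>0 < \<gamma>\<close> \<open>\<gamma> \<le> t\<close> by (intro mult_left_mono) auto
  also have "t * t powr (p - 1) = t powr p" using \<open>0 < \<gamma>\<close> \<open>\<gamma> \<le> t\<close> by (simp add: powr_mult_base)
  finally show ?thesis using \<open>0 < \<gamma>\<close> by (simp add: field_simps)
qed

text \<open>The last term covers \<open>|v| > \<gamma>\<close>, where the error is only bounded by \<open>2|v|\<close>.\<close>

lemma quantisation_error_le:
  fixes v e :: "'a::real_normed_vector"
  assumes e: "norm e = 1" and dir: "v \<noteq> 0 \<Longrightarrow> dist (v /\<^sub>R norm v) e \<le> \<sigma>"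
    and z: "0 \<le> z" "z \<le> min (norm v) \<gamma>" "min (norm v) \<gamma> - \<delta> < z"
    and pos: "0 < \<gamma>" "0 < \<delta>" "0 \<le> \<sigma>" "1 \<le> p"
  shows "norm (v - z *\<^sub>R e) \<le> \<delta> + \<gamma> * \<sigma> + 2 * norm v powr p / \<gamma> powr (p - 1)"
proof (cases "norm v \<le> \<gamma>")
  case True
  have "norm (v - z *\<^sub>R e) \<le> \<delta> + \<gamma> * \<sigma>"
  proof (cases "v = 0")
    case False
    define u where "u = v /\<^sub>R norm v"
    have u: "norm u = 1" using False by (simp add: u_def)
    have "v - z *\<^sub>R e = (norm v - z) *\<^sub>R u + z *\<^sub>R (u - e)"
      using False by (simp add: u_def algebra_simps)
    then have "norm (v - z *\<^sub>R e) \<le> norm ((norm v - z) *\<^sub>R u) + norm (z *\<^sub>R (u - e))"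
      by (metis norm_triangle_ineq)
    also have "norm ((norm v - z) *\<^sub>R u) = norm v - z" using u z by simp
    also have "norm (z *\<^sub>R (u - e)) = z * dist (v /\<^sub>R norm v) e" using z by (simp add: u_def dist_norm)
    also have "z * dist (v /\<^sub>R norm v) e \<le> \<gamma> * \<sigma>"
      using dir[OF False] z True pos by (intro mult_mono) auto
    finally show ?thesis using z True by linarith
  qed (use z pos in auto)
  moreover have "0 \<le> 2 * norm v powr p / \<gamma> powr (p - 1)" by simp
  ultimately show ?thesis by linarith
next
  case False
  have "norm (v - z *\<^sub>R e) \<le> norm v + z"
    using norm_triangle_ineq4[of v "z *\<^sub>R e"] e z by simp
  also have "\<dots> \<le> 2 * norm v powr p / \<gamma> powr (p - 1)"
    using le_powr_div_powr[of \<gamma> "norm v" p] False z pos by linarith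
  finally show ?thesis using pos by (simp add: add_increasing)
qed

lemma ennreal_powr_le_if_le_root_add:
  fixes d a \<phi> C q :: real
  assumes "0 \<le> d" "d \<le> a * \<phi> powr (1/q) + C" "0 \<le> a" "0 \<le> \<phi>" "0 \<le> C" "q > 0"
  shows "ennreal (d powr q) \<le> ennreal (2 powr q * a powr q) * ennreal \<phi> + ennreal (2 powr q * C powr q)"
proof -
  have "d powr q \<le> (a * \<phi> powr (1/q) + C) powr q"
    using assms by (intro powr_mono2) auto
  also have "\<dots> \<le> 2 powr q * ((a * \<phi> powr (1/q)) powr q + C powr q)"
    using assms by (intro powr_add_le_two_powr) auto
  also have "(a * \<phi> powr (1/q)) powr q = a powr q * \<phi>"
    using assms by (simp add: powr_mult powr_powr)
  finally have "ennreal (d powr q) \<le> ennreal (2 powr q * a powr q * \<phi> + 2 powr q * C powr q)"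
    by (simp add: algebra_simps ennreal_leI)
  also have "\<dots> = ennreal (2 powr q * a powr q) * ennreal \<phi> + ennreal (2 powr q * C powr q)"
    using assms by (simp add: ennreal_plus[symmetric] ennreal_mult[symmetric] del: ennreal_plus)
  finally show ?thesis .
qed

lemma mult_le_quarter: "0 \<le> A \<Longrightarrow> 0 < c \<Longrightarrow> 0 \<le> t \<Longrightarrow> t \<le> c / (4 * A + 1) \<Longrightarrow> A * t \<le> c / (4::real)"
proof -
  assume A: "0 \<le> A" and c: "0 < c" and t: "0 \<le> t" "t \<le> c / (4 * A + 1)"
  then have "A * t \<le> A * (c / (4 * A + 1))" by (intro mult_left_mono) auto
  also have "\<dots> \<le> c / 4" using A c by (simp add: divide_le_eq field_simps)
  finally show ?thesis .
qed

lemma borel_measurable_lebesgue_AE_eq_borel: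
  fixes f :: "'a::euclidean_space \<Rightarrow> 'b::euclidean_space"
  assumes f: "f \<in> borel_measurable lebesgue"
  obtains g where "g \<in> borel_measurable lborel" "AE z in lborel. f z = g z"
proof -
  have "\<forall>b\<in>(Basis :: 'b set). \<exists>g. g \<in> borel_measurable lborel \<and> (AE z in lborel. f z \<bullet> b = g z)"
  proof
    fix b :: 'b
    have "(\<lambda>z. f z \<bullet> b) \<in> borel_measurable (completion lborel)"
      using f by measurable
    then show "\<exists>g. g \<in> borel_measurable lborel \<and> (AE z in lborel. f z \<bullet> b = g z)"
      using completion_ex_borel_measurable_real by blast
  qed
  then obtain k where k: "\<And>b. b \<in> Basis \<Longrightarrow> k b \<in> borel_measurable lborel"
    "\<And>b. b \<in> Basis \<Longrightarrow> AE z in lborel. f z \<bullet> b = k b z"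
    by metis
  define g where "g z = (\<Sum>b\<in>Basis. k b z *\<^sub>R b)" for z
  have "g \<in> borel_measurable lborel"
    unfolding g_def[abs_def] using k(1) by (intro borel_measurable_sum borel_measurable_scaleR) auto
  moreover have "AE z in lborel. \<forall>b\<in>Basis. f z \<bullet> b = k b z"
    using k(2) by (intro eventually_ball_finite) auto
  then have "AE z in lborel. f z = g z"
    by eventually_elim (metis (no_types, lifting) euclidean_representation g_def sum.cong)
  ultimately show ?thesis using that by blast
qed

context
  fixes f :: "'a::euclidean_space \<Rightarrow> 'b::euclidean_space" and S :: "'a set" and q :: real
  assumes f: "f \<in> borel_measurable lebesgue" and q: "q \<ge> 1"
    and f_powr: "(\<integral>\<^sup>+z. ennreal (norm (f z) powr q) \<partial>lebesgue) < \<infinity>"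
    and S: "S \<in> sets lebesgue" "emeasure lebesgue S < \<infinity>"
begin

lemma radial_clip_approx:
  assumes e: "e > 0"
  shows "\<exists>R>0. (\<integral>\<^sup>+z. ennreal (norm (f z - radial_clip R (f z)) powr q) \<partial>lebesgue) < ennreal e"
proof -
  define u where "u n z = norm (f z - radial_clip (real n + 1) (f z)) powr q" for n z
  have [measurable]: "f \<in> borel_measurable lebesgue" by (rule f)
  have um: "u n \<in> borel_measurable lebesgue" for n
    using measurable_compose[OF f borel_measurable_radial_clip[of "real n + 1"]]
    unfolding u_def[abs_def] by measurable
  have "(\<lambda>i. (\<integral>\<^sup>+z. norm (0 - u i z) \<partial>lebesgue)) \<longlonglongrightarrow> 0"
  proof (rule nn_integral_dominated_convergence_norm[where w="\<lambda>z. norm (f z) powr q"])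
    show "AE z in lebesgue. norm (u j z) \<le> norm (f z) powr q" for j
      using q by (intro AE_I2) (auto simp: u_def intro!: powr_mono2 norm_diff_radial_clip_le)
    show "AE z in lebesgue. (\<lambda>i. u i z) \<longlonglongrightarrow> 0"
    proof (intro AE_I2 tendsto_eventually)
      fix z
      obtain N :: nat where "norm (f z) \<le> real N" using real_arch_simple by blast
      then have "\<forall>n\<ge>N. u n z = 0" using q by (auto simp: u_def radial_clip_eq)
      then show "eventually (\<lambda>n. u n z = 0) sequentially" by (auto simp: eventually_sequentially)
    qed
  qed (use um f_powr in auto)
  then have "eventually (\<lambda>i. (\<integral>\<^sup>+z. norm (0 - u i z) \<partial>lebesgue) < ennreal e) sequentially"
    using e by (intro order_tendstoD(2)) auto
  then obtain n where "(\<integral>\<^sup>+z. norm (0 - u n z) \<partial>lebesgue) < ennreal e"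
    by (auto simp: eventually_sequentially)
  then show ?thesis by (intro exI[of _ "real n + 1"]) (auto simp: u_def)
qed

lemma continuous_radial_clip_approx:
  assumes e: "e > 0" and R: "R > 0"
  shows "\<exists>g. continuous_on UNIV g \<and>
     (\<integral>\<^sup>+z. ennreal (indicator S z * norm (radial_clip R (f z) - radial_clip R (g z))) \<partial>lebesgue) < ennreal e"
proof -
  have "f measurable_on UNIV" using f by (intro lebesgue_measurable_imp_measurable_on) auto
  then obtain N g where N: "negligible N" and gc: "\<And>n. continuous_on UNIV (g n)"
    and gl: "\<And>z. z \<notin> N \<Longrightarrow> (\<lambda>n. g n z) \<longlonglongrightarrow> f z"
    unfolding measurable_on_def by auto
  have gm: "g n \<in> borel_measurable lebesgue" for n
    using borel_measurable_continuous_onI[OF gc[of n]] by (simp add: measurable_completion)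
  define u where "u n z = indicator S z *\<^sub>R radial_clip R (g n z)" for n z
  define u' where "u' z = indicator S z *\<^sub>R radial_clip R (f z)" for z
  note [measurable] = f S(1) measurable_compose[OF gm borel_measurable_radial_clip[OF R]]
    measurable_compose[OF f borel_measurable_radial_clip[OF R]]
  have "(\<lambda>i. (\<integral>\<^sup>+z. norm (u' z - u i z) \<partial>lebesgue)) \<longlonglongrightarrow> 0"
  proof (rule nn_integral_dominated_convergence_norm[where w="\<lambda>z. indicator S z * R"])
    show "AE z in lebesgue. norm (u j z) \<le> indicator S z * R" for j
      using R by (intro AE_I2) (auto simp: u_def norm_radial_clip_le indicator_def)
    have "(\<integral>\<^sup>+z. ennreal (indicator S z * R) \<partial>lebesgue) = ennreal R * emeasure lebesgue S"
      using S(1) by (subst nn_integral_cmult_indicator[symmetric]) (auto intro!: nn_integral_cong simp: indicator_def)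
    then show "(\<integral>\<^sup>+z. ennreal (indicator S z * R) \<partial>lebesgue) < \<infinity>"
      using S(2) by (simp add: ennreal_mult_less_top)
    have "AE z in lebesgue. z \<notin> N" using N by (intro AE_not_in) (simp add: negligible_iff_null_sets)
    then show "AE z in lebesgue. (\<lambda>i. u i z) \<longlonglongrightarrow> u' z"
    proof eventually_elim
      case (elim z)
      have "(\<lambda>n. radial_clip R (g n z)) \<longlonglongrightarrow> radial_clip R (f z)"
        by (rule continuous_on_tendsto_compose[OF continuous_on_radial_clip[OF R] gl[OF elim]]) auto
      then show ?case unfolding u_def u'_def by (intro tendsto_scaleR tendsto_const)
    qed
  qed (auto simp: u_def[abs_def] u'_def[abs_def])
  then have "eventually (\<lambda>i. (\<integral>\<^sup>+z. norm (u' z - u i z) \<partial>lebesgue) < ennreal e) sequentially"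
    using e by (intro order_tendstoD(2)) auto
  then obtain n where n: "(\<integral>\<^sup>+z. norm (u' z - u n z) \<partial>lebesgue) < ennreal e"
    by (auto simp: eventually_sequentially)
  have "(\<integral>\<^sup>+z. norm (u' z - u n z) \<partial>lebesgue)
      = (\<integral>\<^sup>+z. ennreal (indicator S z * norm (radial_clip R (f z) - radial_clip R (g n z))) \<partial>lebesgue)"
    by (intro nn_integral_cong) (auto simp: u_def u'_def indicator_def)
  then show ?thesis using n gc by auto
qed

lemma continuous_Lq_approx_on:
  assumes eta: "\<eta> > 0"
  obtains G where "continuous_on UNIV G"
    "(\<integral>\<^sup>+z. ennreal (indicator S z * norm (f z - G z) powr q) \<partial>lebesgue) \<le> ennreal \<eta>"
proof -
  define e1 where "e1 = \<eta> / (2 * 2 powr q)"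
  have e1: "e1 > 0" using eta by (simp add: e1_def)
  obtain R where R: "R > 0" and I1: "(\<integral>\<^sup>+z. ennreal (norm (f z - radial_clip R (f z)) powr q) \<partial>lebesgue) < ennreal e1"
    using radial_clip_approx[OF e1] by blast
  define c where "c = (2 * R) powr (q - 1)"
  have c: "c > 0" using R by (simp add: c_def)
  define e2 where "e2 = \<eta> / (2 * 2 powr q * c)"
  have e2: "e2 > 0" using eta c by (simp add: e2_def)
  obtain g where gc: "continuous_on UNIV g"
    and I2: "(\<integral>\<^sup>+z. ennreal (indicator S z * norm (radial_clip R (f z) - radial_clip R (g z))) \<partial>lebesgue) < ennreal e2"
    using continuous_radial_clip_approx[OF e2 R] by blast
  define G where "G z = radial_clip R (g z)" for z
  have Gc: "continuous_on UNIV G"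
    unfolding G_def[abs_def] using continuous_on_compose2[OF continuous_on_radial_clip[OF R] gc] by simp
  have gm: "g \<in> borel_measurable lebesgue"
    using borel_measurable_continuous_onI[OF gc] by (simp add: measurable_completion)
  note [measurable] = f S(1) measurable_compose[OF gm borel_measurable_radial_clip[OF R]]
    measurable_compose[OF f borel_measurable_radial_clip[OF R]]
  define a where "a z = norm (f z - radial_clip R (f z))" for z
  define b where "b z = indicator S z * norm (radial_clip R (f z) - G z)" for z
  have pt: "indicator S z * norm (f z - G z) powr q \<le> 2 powr q * a z powr q + (2 powr q * c) * b z" for z
    using norm_diff_radial_clip_powr_le[OF R q, of "f z" "g z"] c
    by (cases "z \<in> S") (simp_all add: a_def b_def c_def G_def)
  have "(\<integral>\<^sup>+z. ennreal (indicator S z * norm (f z - G z) powr q) \<partial>lebesgue)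
      \<le> (\<integral>\<^sup>+z. ennreal (2 powr q) * ennreal (a z powr q) + ennreal (2 powr q * c) * ennreal (b z) \<partial>lebesgue)"
    using pt c by (intro nn_integral_mono)
      (simp add: ennreal_plus[symmetric] ennreal_mult[symmetric] ennreal_leI b_def del: ennreal_plus)
  also have "\<dots> = ennreal (2 powr q) * (\<integral>\<^sup>+z. ennreal (a z powr q) \<partial>lebesgue)
      + ennreal (2 powr q * c) * (\<integral>\<^sup>+z. ennreal (b z) \<partial>lebesgue)"
    by (subst nn_integral_add) (auto simp: nn_integral_cmult a_def b_def G_def)
  also have "\<dots> \<le> ennreal (2 powr q) * ennreal e1 + ennreal (2 powr q * c) * ennreal e2"
    using I1 I2 by (intro add_mono mult_left_mono) (auto simp: a_def b_def G_def)
  also have "\<dots> = ennreal (2 powr q * e1 + 2 powr q * c * e2)"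
    using c e1 e2 by (simp add: ennreal_plus[symmetric] ennreal_mult[symmetric] del: ennreal_plus)
  also have "2 powr q * e1 + 2 powr q * c * e2 = \<eta>"
    using c by (simp add: e1_def e2_def field_simps)
  finally show ?thesis using Gc that by blast
qed

end

locale kernel_operator =
  fixes \<Omega> :: "(real^'k) set" and K :: "real^'k \<Rightarrow> real^'k \<Rightarrow> real^'n^'m" and p q r :: real
  assumes cpt: "compact \<Omega>" and p1: "p > 1" and pq: "1/p+1/q=1" and r0: "r > 0"
    and Kmeas: "(\<lambda>(\<xi>, s). K \<xi> s) \<in> borel_measurable (lebesgue_on (\<Omega> \<times> \<Omega>))"
    and Kint: "integrable (lebesgue_on (\<Omega> \<times> \<Omega>)) (\<lambda>(\<xi>, s). norm (K \<xi> s) powr q)"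
begin

abbreviation "M \<equiv> lebesgue_on \<Omega>"
definition "vol = measure lebesgue \<Omega>"

lemma q_gt_1: "q > 1"
  using conjugate_exponent_gt_one[OF p1 pq] .

lemma Omega_lmeasurable: "\<Omega> \<in> lmeasurable" using cpt by (simp add: lmeasurable_compact)
lemma Omega_sets[simp]: "\<Omega> \<in> sets lebesgue" using Omega_lmeasurable by (simp add: fmeasurableD)
lemma Omega_borel[simp, measurable]: "\<Omega> \<in> sets borel" using cpt by (simp add: compact_imp_closed borel_closed)
lemma vol_nonneg: "0 \<le> vol" by (simp add: vol_def)
lemma emeasure_Omega: "emeasure lebesgue \<Omega> = ennreal vol"
  using Omega_lmeasurable by (simp add: vol_def emeasure_eq_measure2)
lemma emeasure_M_Omega: "emeasure M \<Omega> = ennreal vol"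
  by (simp add: emeasure_restrict_space emeasure_Omega)

lemma nn_integral_const_M: "(\<integral>\<^sup>+x. ennreal c \<partial>M) = ennreal c * ennreal vol"
  by (simp add: emeasure_M_Omega)

lemma finite_measure_M: "finite_measure M"
  by (rule finite_measureI) (simp add: emeasure_M_Omega)

lemma emeasure_M_finite: "emeasure M A < \<infinity>"
  using finite_measure.emeasure_finite[OF finite_measure_M] by (simp add: top.not_eq_extremum)

context
  fixes y assumes y: "y \<in> Bp p \<Omega> r"
begin

lemma Bp_measurable: "y \<in> borel_measurable M"
  using y by (simp add: Bp_def in_Lp_def)

lemma Bp_integrable_powr: "integrable M (\<lambda>s. norm (y s) powr p)"
  using y by (simp add: Bp_def in_Lp_def)

lemma Bp_integral_powr_le: "integral\<^sup>L M (\<lambda>s. norm (y s) powr p) \<le> r powr p"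
proof -
  let ?I = "integral\<^sup>L M (\<lambda>s. norm (y s) powr p)"
  have I0: "0 \<le> ?I" by (intro integral_nonneg_AE) auto
  have "?I powr (1/p) \<le> r" using y by (simp add: Bp_def Lp_norm_def)
  then have "(?I powr (1/p)) powr p \<le> r powr p"
    using p1 by (intro powr_mono2) auto
  then show ?thesis using I0 p1 by (simp add: powr_powr)
qed

lemma Bp_nn_integral_powr_le: "(\<integral>\<^sup>+s. ennreal (norm (y s) powr p) \<partial>M) \<le> ennreal (r powr p)"
proof -
  have "(\<integral>\<^sup>+s. ennreal (norm (y s) powr p) \<partial>M) = ennreal (integral\<^sup>L M (\<lambda>s. norm (y s) powr p))"
    using Bp_integrable_powr by (intro nn_integral_eq_integral) auto
  then show ?thesis using Bp_integral_powr_le by (simp add: ennreal_leI)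
qed

lemma Bp_nn_integral_norm_le: "(\<integral>\<^sup>+s. ennreal (norm (y s)) \<partial>M) \<le> ennreal (vol + r powr p)"
proof -
  have "(\<integral>\<^sup>+s. ennreal (norm (y s)) \<partial>M) \<le> (\<integral>\<^sup>+s. ennreal 1 + ennreal (norm (y s) powr p) \<partial>M)"
  proof (intro nn_integral_mono)
    fix s
    have "ennreal (norm (y s)) \<le> ennreal (1 + norm (y s) powr p)"
      using p1 by (intro ennreal_leI le_one_plus_powr) auto
    then show "ennreal (norm (y s)) \<le> ennreal 1 + ennreal (norm (y s) powr p)"
      by (simp add: ennreal_plus)
  qed
  also have "\<dots> = (\<integral>\<^sup>+s. ennreal 1 \<partial>M) + (\<integral>\<^sup>+s. ennreal (norm (y s) powr p) \<partial>M)"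
    using Bp_measurable by (intro nn_integral_add) auto
  also have "\<dots> \<le> ennreal vol + ennreal (r powr p)"
    using nn_integral_const_M[of 1] by (intro add_mono Bp_nn_integral_powr_le) simp
  finally show ?thesis using vol_nonneg by (simp add: ennreal_plus)
qed

lemma Bp_integrable: "integrable M y"
  using Bp_measurable Bp_nn_integral_norm_le
  by (intro integrableI_bounded) (auto simp: top.not_eq_extremum dest: order.strict_trans1[OF _ ennreal_less_top])

lemma integral_norm_Bp_le: "integral\<^sup>L M (\<lambda>s. norm (y s)) \<le> vol + r powr p"
  using Bp_nn_integral_norm_le vol_nonneg by (intro integral_le_of_nn_integral_le) auto

end

lemma partition_cell:
  assumes "is_Delta_partition \<Omega> \<Delta> P" "A \<in> P"
  shows "A \<in> sets M" "A \<subseteq> \<Omega>" "A \<in> sets lebesgue" "measure M A = measure lebesgue A"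
proof -
  show A1: "A \<subseteq> \<Omega>" "A \<in> sets lebesgue" using assms by (auto simp: is_Delta_partition_def)
  then show "A \<in> sets M" by (simp add: sets_restrict_space_iff)
  show "measure M A = measure lebesgue A" using A1 by (simp add: measure_restrict_space)
qed

lemma partition_cover:
  assumes "is_Delta_partition \<Omega> \<Delta> P" "s \<in> \<Omega>"
  obtains A where "A \<in> P" "s \<in> A"
  using assms by (auto simp: is_Delta_partition_def)

lemma partition_finite: "is_Delta_partition \<Omega> \<Delta> P \<Longrightarrow> finite P"
  and partition_disjoint: "is_Delta_partition \<Omega> \<Delta> P \<Longrightarrow> disjoint P"
  by (auto simp: is_Delta_partition_def)

lemma integrable_indicator_cell:
  "is_Delta_partition \<Omega> \<Delta> P \<Longrightarrow> A \<in> P \<Longrightarrow> integrable M (indicator A :: _ \<Rightarrow> real)"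
  using partition_cell emeasure_M_finite by (intro integrable_real_indicator) auto

lemma integral_indicator_cell:
  "is_Delta_partition \<Omega> \<Delta> P \<Longrightarrow> A \<in> P \<Longrightarrow> integral\<^sup>L M (indicator A :: _ \<Rightarrow> real) = measure lebesgue A"
  using partition_cell[of \<Delta> P A] by (simp add: Int_absorb2)

context
  fixes \<Delta> P and x :: "real^'k \<Rightarrow> 'b::{real_normed_vector, second_countable_topology}" and c
  assumes P: "is_Delta_partition \<Omega> \<Delta> P" and step: "\<And>A \<xi>. A \<in> P \<Longrightarrow> \<xi> \<in> A \<Longrightarrow> x \<xi> = c A"
begin

lemma step_function_eq_sum:
  fixes h :: "'b \<Rightarrow> real"
  shows "s \<in> \<Omega> \<Longrightarrow> h (x s) = (\<Sum>A\<in>P. indicator A s * h (c A))"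
proof -
  assume "s \<in> \<Omega>"
  then obtain A0 where A0: "A0 \<in> P" "s \<in> A0" using partition_cover[OF P] by blast
  then show ?thesis
    using sum_partition_indicator[OF partition_disjoint[OF P] A0 partition_finite[OF P], of "\<lambda>B. h (c B)"]
      step[OF A0] by simp
qed

lemma step_function_measurable: "x \<in> borel_measurable M"
proof (rule measurable_cong[THEN iffD2])
  show "x s = (\<Sum>A\<in>P. indicator A s *\<^sub>R c A)" if s: "s \<in> space M" for s
  proof -
    obtain A0 where A0: "A0 \<in> P" "s \<in> A0" using s partition_cover[OF P] by auto
    then show ?thesis
      using sum_partition_indicator_scaleR[OF partition_disjoint[OF P] A0 partition_finite[OF P], of c]
        step[OF A0] by simp
  qed
  show "(\<lambda>s. \<Sum>A\<in>P. indicator A s *\<^sub>R c A) \<in> borel_measurable M"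
    using partition_cell[OF P] by (intro borel_measurable_sum borel_measurable_scaleR borel_measurable_indicator) auto
qed

lemma step_function_integral:
  fixes h :: "'b \<Rightarrow> real"
  shows "integrable M (\<lambda>s. h (x s))"
    and "integral\<^sup>L M (\<lambda>s. h (x s)) = (\<Sum>A\<in>P. measure lebesgue A * h (c A))"
proof -
  have sum: "integrable M (\<lambda>s. \<Sum>A\<in>P. indicator A s * h (c A))"
    using integrable_indicator_cell[OF P] by (intro Bochner_Integration.integrable_sum integrable_mult_left)
  have eq: "\<And>s. s \<in> space M \<Longrightarrow> h (x s) = (\<Sum>A\<in>P. indicator A s * h (c A))"
    using step_function_eq_sum by simp
  show "integrable M (\<lambda>s. h (x s))"
    using sum by (subst Bochner_Integration.integrable_cong[OF refl eq]) auto
  have "integral\<^sup>L M (\<lambda>s. h (x s)) = integral\<^sup>L M (\<lambda>s. \<Sum>A\<in>P. indicator A s * h (c A))"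
    by (intro Bochner_Integration.integral_cong) (auto simp: eq)
  also have "\<dots> = (\<Sum>A\<in>P. measure lebesgue A * h (c A))"
    using integrable_indicator_cell[OF P] integral_indicator_cell[OF P]
    by (subst Bochner_Integration.integral_sum) auto
  finally show "integral\<^sup>L M (\<lambda>s. h (x s)) = (\<Sum>A\<in>P. measure lebesgue A * h (c A))" .
qed

end

lemma Bp_disc_subset_Bp:
  fixes Es :: "'b::euclidean_space set"
  assumes P: "is_Delta_partition \<Omega> \<Delta> P" and Lam: "Lam \<subseteq> {0..}" and Es: "Es \<subseteq> sphere 0 1"
  shows "Bp_disc p r P Lam Es \<subseteq> Bp p \<Omega> r"
proof
  fix x assume "x \<in> Bp_disc p r P Lam Es"
  then obtain z e where ze: "\<And>A. A \<in> P \<Longrightarrow> z A \<in> Lam \<and> e A \<in> Es \<and> (\<forall>\<xi>\<in>A. x \<xi> = z A *\<^sub>R e A)"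
    and sum_le: "(\<Sum>A\<in>P. measure lebesgue A * z A powr p) \<le> r powr p"
    unfolding Bp_disc_def by blast
  have step: "\<And>A \<xi>. A \<in> P \<Longrightarrow> \<xi> \<in> A \<Longrightarrow> x \<xi> = z A *\<^sub>R e A" using ze by blast
  have norm_step: "norm (z A *\<^sub>R e A) powr p = z A powr p" if "A \<in> P" for A
  proof -
    have "0 \<le> z A" "norm (e A) = 1" using ze[OF that] Lam Es by auto
    then show ?thesis by simp
  qed
  note integral = step_function_integral[OF P step, where h = "\<lambda>v. norm v powr p"]
  have "integral\<^sup>L M (\<lambda>s. norm (x s) powr p) = (\<Sum>A\<in>P. measure lebesgue A * norm (z A *\<^sub>R e A) powr p)"
    using integral(2) by (simp only:)
  also have "\<dots> = (\<Sum>A\<in>P. measure lebesgue A * z A powr p)"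
    by (intro sum.cong refl) (simp only: norm_step)
  finally have "integral\<^sup>L M (\<lambda>s. norm (x s) powr p) \<le> r powr p" using sum_le by simp
  then have "Lp_norm p \<Omega> x \<le> r" using p1 r0 by (intro Lp_norm_le_if_integral_powr_le) auto
  then show "x \<in> Bp p \<Omega> r"
    using step_function_measurable[OF P step] integral(1) by (simp add: Bp_def in_Lp_def)
qed

lemma integral_sum_partition:
  fixes f :: "real^'k \<Rightarrow> 'b::{banach,second_countable_topology}"
  assumes P: "is_Delta_partition \<Omega> \<Delta> P" and f: "integrable M f"
  shows "(\<Sum>A\<in>P. integral\<^sup>L M (\<lambda>s. indicator A s *\<^sub>R f s)) = integral\<^sup>L M f"
proof -
  have "(\<Sum>A\<in>P. integral\<^sup>L M (\<lambda>s. indicator A s *\<^sub>R f s)) = integral\<^sup>L M (\<lambda>s. \<Sum>A\<in>P. indicator A s *\<^sub>R f s)"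
    using partition_cell[OF P] f
    by (intro Bochner_Integration.integral_sum[symmetric] integrable_mult_indicator) auto
  also have "\<dots> = integral\<^sup>L M f"
  proof (intro Bochner_Integration.integral_cong refl)
    fix s assume "s \<in> space M"
    then obtain A0 where "A0 \<in> P" "s \<in> A0" using partition_cover[OF P] by auto
    then show "(\<Sum>A\<in>P. indicator A s *\<^sub>R f s) = f s"
      using sum_partition_indicator_scaleR[OF partition_disjoint[OF P] _ _ partition_finite[OF P], of A0 s "\<lambda>_. f s"]
      by simp
  qed
  finally show ?thesis .
qed

lemma sum_partition_measure:
  assumes P: "is_Delta_partition \<Omega> \<Delta> P"
  shows "(\<Sum>A\<in>P. measure lebesgue A) = vol"
  using step_function_integral(2)[OF P, where x = "\<lambda>_. 0::real" and c = "\<lambda>_. 0" and h = "\<lambda>_. 1"]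
  by (simp add: vol_def measure_restrict_space)

lemma integral_null_cell:
  fixes f :: "real^'k \<Rightarrow> 'b::{banach,second_countable_topology}"
  assumes P: "is_Delta_partition \<Omega> \<Delta> P" "A \<in> P" and m0: "measure lebesgue A = 0"
    and fm: "f \<in> borel_measurable M"
  shows "integral\<^sup>L M (\<lambda>s. indicator A s *\<^sub>R f s) = 0"
proof -
  have "A \<in> lmeasurable" using partition_cell(2,3)[OF P] Omega_lmeasurable fmeasurableI2 by blast
  then have "A \<in> null_sets M"
    using partition_cell[OF P] m0 by (simp add: null_sets_def emeasure_restrict_space emeasure_eq_measure2)
  then have "AE s in M. indicator A s *\<^sub>R f s = 0" by (auto dest: AE_not_in)
  then have "integral\<^sup>L M (\<lambda>s. indicator A s *\<^sub>R f s) = integral\<^sup>L M (\<lambda>s. 0::'b)"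
    using partition_cell[OF P] fm by (intro integral_cong_AE) auto
  then show ?thesis by simp
qed

lemma norm_integral_indicator_le_Holder:
  assumes A: "A \<in> sets M" and y: "y \<in> Bp p \<Omega> r"
  shows "norm (integral\<^sup>L M (\<lambda>s. indicator A s *\<^sub>R y s))
    \<le> integral\<^sup>L M (\<lambda>s. indicator A s * norm (y s) powr p) powr (1/p) * measure M A powr (1/q)"
proof -
  define J where "J = integral\<^sup>L M (\<lambda>s. indicator A s * norm (y s) powr p)"
  define f where "f s = indicator A s * norm (y s)" for s
  define g where "g s = (indicator A s :: real)" for s
  have fm: "f \<in> borel_measurable M" unfolding f_def using A Bp_measurable[OF y] by measurable
  have gm: "g \<in> borel_measurable M" unfolding g_def using A by measurable
  have fp: "f s powr p = indicator A s * norm (y s) powr p" for s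
    using p1 by (simp add: f_def indicator_def)
  have gq: "g s powr q = indicator A s" for s using q_gt_1 by (simp add: g_def indicator_def)
  have "(\<integral>\<^sup>+s. ennreal (f s powr p) \<partial>M) = ennreal J"
    unfolding fp J_def using integrable_mult_indicator[OF A Bp_integrable_powr[OF y]]
    by (intro nn_integral_eq_integral) auto
  moreover have "(\<integral>\<^sup>+s. ennreal (g s powr q) \<partial>M) = ennreal (measure M A)"
    unfolding gq using A emeasure_M_finite[of A]
    by (simp add: ennreal_indicator nn_integral_indicator emeasure_eq_ennreal_measure top.not_eq_extremum)
  moreover have "0 \<le> J" unfolding J_def by (intro integral_nonneg_AE) auto
  ultimately have "(\<integral>\<^sup>+s. ennreal (f s * g s) \<partial>M) \<le> ennreal (J powr (1/p) * measure M A powr (1/q))"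
    by (intro nn_integral_Holder[OF fm gm _ _ p1 pq]) (auto simp: f_def g_def)
  then have "integral\<^sup>L M (\<lambda>s. f s * g s) \<le> J powr (1/p) * measure M A powr (1/q)"
    by (intro integral_le_of_nn_integral_le) (auto simp: f_def g_def)
  moreover have "(\<lambda>s. norm (indicator A s *\<^sub>R y s)) = (\<lambda>s. f s * g s)"
    by (auto simp: f_def g_def indicator_def)
  ultimately show ?thesis
    using integral_norm_bound[of M "\<lambda>s. indicator A s *\<^sub>R y s"] unfolding J_def by simp
qed

end

text \<open>On a null cell \<open>cell_mean\<close> is \<open>0\<close> (division by zero), which is harmless because
  \<open>cell_int\<close> vanishes there too.\<close>

locale discretisation = kernel_operator \<Omega> K p q r
  for \<Omega> :: "(real^'k) set" and K :: "real^'k \<Rightarrow> real^'k \<Rightarrow> real^'n^'m" and p q r +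
  fixes x :: "real^'k \<Rightarrow> real^'n" and P and \<Delta> \<gamma> :: real and a :: nat and \<sigma> :: real and Es :: "(real^'n) set"
  assumes x: "x \<in> Bp p \<Omega> r" and P: "is_Delta_partition \<Omega> \<Delta> P" and \<gamma>: "\<gamma> > 0" and a: "a \<ge> 1"
    and \<sigma>: "\<sigma> > 0" and net: "is_finite_net \<sigma> (sphere 0 1) Es"
begin

definition "cell_int A = integral\<^sup>L M (\<lambda>s. indicator A s *\<^sub>R x s)"
definition "cell_meas A = measure lebesgue A"
definition "cell_mean A = cell_int A /\<^sub>R cell_meas A"
definition "step = \<gamma> / real a"
definition "level A = real (nat \<lfloor>min (norm (cell_mean A)) \<gamma> / step\<rfloor>) * step"
definition "some_unit = (SOME u::real^'n. u \<in> sphere 0 1)"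
definition "direction A = (if cell_mean A = 0 then some_unit else cell_mean A /\<^sub>R norm (cell_mean A))"
definition "net_point A = (SOME e. e \<in> Es \<and> dist (direction A) e \<le> \<sigma>)"
definition "x_disc \<xi> = (\<Sum>A\<in>P. indicator A \<xi> *\<^sub>R (level A *\<^sub>R net_point A))"

lemma step_pos: "step > 0" using \<gamma> a by (simp add: step_def)
lemma cell_meas_nonneg: "0 \<le> cell_meas A" by (simp add: cell_meas_def)

lemma level_bounds: "0 \<le> level A" "level A \<le> min (norm (cell_mean A)) \<gamma>"
  "min (norm (cell_mean A)) \<gamma> - step < level A" "level A \<in> unif_grid \<gamma> a"
proof -
  define t where "t = min (norm (cell_mean A)) \<gamma> / step"
  have t0: "0 \<le> t" using step_pos \<gamma> by (simp add: t_def)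
  have level: "level A = real (nat \<lfloor>t\<rfloor>) * step" by (simp add: level_def t_def)
  have fl: "real (nat \<lfloor>t\<rfloor>) = of_int \<lfloor>t\<rfloor>" using t0 by simp
  show "0 \<le> level A" using step_pos level by simp
  have "real (nat \<lfloor>t\<rfloor>) \<le> t" using fl by simp
  then have "level A \<le> t * step" using level step_pos by (simp add: mult_right_mono)
  then show "level A \<le> min (norm (cell_mean A)) \<gamma>" using step_pos by (simp add: t_def)
  have "t - 1 < real (nat \<lfloor>t\<rfloor>)" using fl by linarith
  then have "(t - 1) * step < level A" using level step_pos by (simp add: mult_strict_right_mono)
  then show "min (norm (cell_mean A)) \<gamma> - step < level A" using step_pos by (simp add: t_def algebra_simps)
  have "t \<le> \<gamma> / step" using step_pos by (simp add: t_def divide_right_mono)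
  also have "\<gamma> / step = real a" using \<gamma> a by (simp add: step_def)
  finally have "nat \<lfloor>t\<rfloor> \<le> a" by linarith
  then show "level A \<in> unif_grid \<gamma> a" unfolding unif_grid_def level step_def by auto
qed

lemma direction_in_sphere: "direction A \<in> sphere 0 1"
proof -
  have "some_unit \<in> sphere (0::real^'n) 1"
    unfolding some_unit_def by (rule someI_ex) (use norm_Basis SOME_Basis in auto)
  then show ?thesis by (auto simp: direction_def)
qed

lemma net_point: "net_point A \<in> Es" "dist (direction A) (net_point A) \<le> \<sigma>"
proof -
  have "\<exists>e. e \<in> Es \<and> dist (direction A) e \<le> \<sigma>" using net direction_in_sphere by (auto simp: is_finite_net_def)
  then have "net_point A \<in> Es \<and> dist (direction A) (net_point A) \<le> \<sigma>" unfolding net_point_def by (rule someI_ex)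
  then show "net_point A \<in> Es" "dist (direction A) (net_point A) \<le> \<sigma>" by auto
qed

lemma norm_net_point: "norm (net_point A) = 1" using net_point(1)[of A] net by (auto simp: is_finite_net_def)

lemma x_integrable: "integrable M x" using Bp_integrable[OF x] .
lemma x_measurable: "x \<in> borel_measurable M" using Bp_measurable[OF x] .

lemma cell_int_eq: "A \<in> P \<Longrightarrow> cell_int A = cell_meas A *\<^sub>R cell_mean A"
  using integral_null_cell[OF P _ _ x_measurable]
  by (cases "cell_meas A = 0") (simp_all add: cell_int_def cell_meas_def cell_mean_def)

lemma cell_meas_mean_powr_le:
  assumes A: "A \<in> P"
  shows "cell_meas A * norm (cell_mean A) powr p \<le> integral\<^sup>L M (\<lambda>s. indicator A s * norm (x s) powr p)"
    (is "_ \<le> ?J")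
proof (cases "cell_meas A = 0")
  case True
  then show ?thesis by (simp add: integral_nonneg_AE)
next
  case False
  then have "cell_meas A > 0" using cell_meas_nonneg[of A] by simp
  moreover have "norm (cell_int A) \<le> ?J powr (1/p) * cell_meas A powr (1/q)"
    using norm_integral_indicator_le_Holder[OF partition_cell(1)[OF P A] x] partition_cell(4)[OF P A]
    by (simp add: cell_int_def cell_meas_def)
  ultimately have "cell_meas A * (norm (cell_int A) / cell_meas A) powr p \<le> ?J"
    using p1 pq by (intro mult_powr_div_le_if_Holder) (auto intro: integral_nonneg_AE)
  then show ?thesis using cell_meas_nonneg[of A] by (simp add: cell_mean_def divide_inverse_commute)
qed

lemma sum_cell_meas_mean_powr_le: "(\<Sum>A\<in>P. cell_meas A * norm (cell_mean A) powr p) \<le> r powr p"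
proof -
  have "(\<Sum>A\<in>P. cell_meas A * norm (cell_mean A) powr p)
      \<le> (\<Sum>A\<in>P. integral\<^sup>L M (\<lambda>s. indicator A s * norm (x s) powr p))"
    by (intro sum_mono cell_meas_mean_powr_le)
  also have "\<dots> = integral\<^sup>L M (\<lambda>s. norm (x s) powr p)"
    using integral_sum_partition[OF P Bp_integrable_powr[OF x]] by simp
  finally show ?thesis using Bp_integral_powr_le[OF x] by simp
qed

lemma x_disc_on_cell: "A \<in> P \<Longrightarrow> \<xi> \<in> A \<Longrightarrow> x_disc \<xi> = level A *\<^sub>R net_point A"
  unfolding x_disc_def
  using sum_partition_indicator_scaleR[OF partition_disjoint[OF P] _ _ partition_finite[OF P],
      of A \<xi> "\<lambda>B. level B *\<^sub>R net_point B"] by simp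

lemma x_disc_in_Bp_disc: "x_disc \<in> Bp_disc p r P (unif_grid \<gamma> a) Es"
proof -
  have "(\<Sum>A\<in>P. measure lebesgue A * level A powr p) \<le> (\<Sum>A\<in>P. cell_meas A * norm (cell_mean A) powr p)"
    unfolding cell_meas_def using level_bounds p1 by (intro sum_mono mult_left_mono powr_mono2) auto
  then have "(\<Sum>A\<in>P. measure lebesgue A * level A powr p) \<le> r powr p"
    using sum_cell_meas_mean_powr_le by linarith
  then show ?thesis unfolding Bp_disc_def
    by (intro CollectI exI[of _ level] exI[of _ net_point] conjI ballI)
      (simp_all add: x_disc_on_cell level_bounds net_point)
qed

lemma quantisation_error:
  "norm (cell_mean A - level A *\<^sub>R net_point A) \<le> step + \<gamma> * \<sigma> + 2 * norm (cell_mean A) powr p / \<gamma> powr (p - 1)"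
  using net_point(2)[of A] level_bounds[of A] step_pos \<gamma> \<sigma> p1
  by (intro quantisation_error_le norm_net_point) (auto simp: direction_def)

lemma sum_quantisation_error:
  "(\<Sum>A\<in>P. cell_meas A * norm (cell_mean A - level A *\<^sub>R net_point A))
    \<le> vol * (step + \<gamma> * \<sigma>) + 2 * r powr p / \<gamma> powr (p - 1)"
proof -
  have "(\<Sum>A\<in>P. cell_meas A * norm (cell_mean A - level A *\<^sub>R net_point A))
      \<le> (\<Sum>A\<in>P. cell_meas A * (step + \<gamma> * \<sigma>) + (2 / \<gamma> powr (p - 1)) * (cell_meas A * norm (cell_mean A) powr p))"
  proof (intro sum_mono)
    fix A
    have "cell_meas A * norm (cell_mean A - level A *\<^sub>R net_point A)
        \<le> cell_meas A * (step + \<gamma> * \<sigma> + 2 * norm (cell_mean A) powr p / \<gamma> powr (p - 1))"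
      using quantisation_error cell_meas_nonneg by (intro mult_left_mono) auto
    then show "cell_meas A * norm (cell_mean A - level A *\<^sub>R net_point A)
        \<le> cell_meas A * (step + \<gamma> * \<sigma>) + (2 / \<gamma> powr (p - 1)) * (cell_meas A * norm (cell_mean A) powr p)"
      by (simp add: algebra_simps)
  qed
  also have "\<dots> = (\<Sum>A\<in>P. cell_meas A) * (step + \<gamma> * \<sigma>)
      + (2 / \<gamma> powr (p - 1)) * (\<Sum>A\<in>P. cell_meas A * norm (cell_mean A) powr p)"
    by (simp add: sum.distrib sum_distrib_left sum_distrib_right)
  also have "(\<Sum>A\<in>P. cell_meas A) = vol" using sum_partition_measure[OF P] by (simp add: cell_meas_def)
  also have "(2 / \<gamma> powr (p - 1)) * (\<Sum>A\<in>P. cell_meas A * norm (cell_mean A) powr p) \<le> (2 / \<gamma> powr (p - 1)) * r powr p"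
    using sum_cell_meas_mean_powr_le \<gamma> by (intro mult_left_mono) auto
  finally show ?thesis by simp
qed

end

context kernel_operator begin

definition "K_ext z = indicator (\<Omega> \<times> \<Omega>) z *\<^sub>R (case z of (\<xi>, s) \<Rightarrow> K \<xi> s)"

lemma Omega2_lmeasurable: "\<Omega> \<times> \<Omega> \<in> lmeasurable" using cpt by (simp add: lmeasurable_compact compact_Times)
lemma Omega2_sets[simp]: "\<Omega> \<times> \<Omega> \<in> sets lebesgue" using Omega2_lmeasurable by (simp add: fmeasurableD)

lemma Omega2_borel[measurable]: "\<Omega> \<times> \<Omega> \<in> sets borel"
  using cpt by (simp add: compact_Times compact_imp_closed borel_closed)

lemma K_ext_measurable: "K_ext \<in> borel_measurable lebesgue"
proof -
  have "(\<lambda>z. indicator (\<Omega> \<times> \<Omega>) z *\<^sub>R (case z of (\<xi>, s) \<Rightarrow> K \<xi> s)) \<in> borel_measurable lebesgue"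
    using Kmeas by (subst borel_measurable_restrict_space_iff[symmetric]) auto
  then show ?thesis by (simp add: K_ext_def[abs_def])
qed

lemma nn_integral_K_ext_powr_finite: "(\<integral>\<^sup>+z. ennreal (norm (K_ext z) powr q) \<partial>lebesgue) < \<infinity>"
proof -
  have "(\<integral>\<^sup>+z. ennreal (norm ((\<lambda>(\<xi>, s). norm (K \<xi> s) powr q) z)) \<partial>lebesgue_on (\<Omega>\<times>\<Omega>)) < \<infinity>"
    using Kint unfolding integrable_iff_bounded by blast
  also have "(\<integral>\<^sup>+z. ennreal (norm ((\<lambda>(\<xi>, s). norm (K \<xi> s) powr q) z)) \<partial>lebesgue_on (\<Omega>\<times>\<Omega>))
     = (\<integral>\<^sup>+z. ennreal (norm ((\<lambda>(\<xi>, s). norm (K \<xi> s) powr q) z)) * indicator (\<Omega>\<times>\<Omega>) z \<partial>lebesgue)"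
    by (simp add: nn_integral_restrict_space)
  also have "\<dots> = (\<integral>\<^sup>+z. ennreal (norm (K_ext z) powr q) \<partial>lebesgue)"
    by (intro nn_integral_cong) (auto simp: K_ext_def indicator_def)
  finally show ?thesis .
qed

lemma emeasure_Omega2: "emeasure lebesgue (\<Omega>\<times>\<Omega>) < \<infinity>"
  using Omega2_lmeasurable by (simp add: fmeasurable_def)

lemma indicator_snd_measurable[measurable]:
  "(\<lambda>z::(real^'k) \<times> (real^'k). indicator \<Omega> (snd z) :: ennreal) \<in> borel_measurable borel"
  using measurable_compose[OF borel_measurable_continuous_onI[OF continuous_on_snd[OF continuous_on_id]]
      borel_measurable_indicator[OF Omega_borel]]
  by simp

definition "K_borel = (SOME G. G \<in> borel_measurable lborel \<and> (AE z in lborel. K_ext z = G z))"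

lemma K_borel: "K_borel \<in> borel_measurable lborel" "AE z in lborel. K_ext z = K_borel z"
proof -
  obtain G where "G \<in> borel_measurable lborel" "AE z in lborel. K_ext z = G z"
    using borel_measurable_lebesgue_AE_eq_borel[OF K_ext_measurable] .
  then have "\<exists>G. G \<in> borel_measurable lborel \<and> (AE z in lborel. K_ext z = G z)" by blast
  from someI_ex[OF this] show "K_borel \<in> borel_measurable lborel" "AE z in lborel. K_ext z = K_borel z"
    unfolding K_borel_def by auto
qed

lemma K_borel_measurable[measurable]: "K_borel \<in> borel_measurable borel"
  using K_borel(1) by simp

lemma AE_M_if_AE_lborel: "(AE \<xi> in lborel. P \<xi>) \<Longrightarrow> AE \<xi> in M. P \<xi>"
  by (subst AE_restrict_space_iff) (auto dest: AE_completion)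

lemma K_borel_sections: "AE \<xi> in M. AE s in M. K \<xi> s = K_borel (\<xi>, s)"
proof -
  have "AE z in (lborel \<Otimes>\<^sub>M lborel). K_ext z = K_borel z" using K_borel(2) by (subst lborel_prod)
  then have "AE \<xi> in lborel. AE s in lborel. K_ext (\<xi>, s) = K_borel (\<xi>, s)"
    by (rule lborel_pair.AE_pair)
  then have "AE \<xi> in M. AE s in lborel. K_ext (\<xi>, s) = K_borel (\<xi>, s)" by (rule AE_M_if_AE_lborel)
  then show ?thesis
  proof (rule AE_mp[OF _ AE_I2], intro impI)
    fix \<xi> assume "\<xi> \<in> space M" and ae: "AE s in lborel. K_ext (\<xi>, s) = K_borel (\<xi>, s)"
    then have "\<xi> \<in> \<Omega>" by simp
    have "AE s in M. K_ext (\<xi>, s) = K_borel (\<xi>, s)" using ae by (rule AE_M_if_AE_lborel)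
    then show "AE s in M. K \<xi> s = K_borel (\<xi>, s)"
    proof (rule AE_mp[OF _ AE_I2], intro impI)
      fix s assume "s \<in> space M" "K_ext (\<xi>, s) = K_borel (\<xi>, s)"
      then show "K \<xi> s = K_borel (\<xi>, s)" using \<open>\<xi> \<in> \<Omega>\<close> by (simp add: K_ext_def)
    qed
  qed
qed

definition "row_integral L \<xi> = (\<integral>\<^sup>+s. ennreal (norm (L (\<xi>, s)) powr q) \<partial>M)"

lemma row_integral_lborel: "row_integral L \<xi> = (\<integral>\<^sup>+s. ennreal (norm (L (\<xi>, s)) powr q) * indicator \<Omega> s \<partial>lborel)"
  unfolding row_integral_def by (rule nn_integral_lebesgue_on_eq) simp

lemma sets_lborel_pair: "sets (lborel \<Otimes>\<^sub>M lborel) = sets (borel :: ((real^'k) \<times> (real^'k)) measure)"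
  by (subst lborel_prod) simp

lemma row_integral_measurable:
  fixes L :: "(real^'k) \<times> (real^'k) \<Rightarrow> real^'n^'m"
  assumes L: "L \<in> borel_measurable borel"
  shows "row_integral L \<in> borel_measurable M"
proof -
  note [measurable] = L
  have "(\<lambda>z. ennreal (norm (L z) powr q) * indicator \<Omega> (snd z)) \<in> borel_measurable borel"
    by measurable
  then have "(\<lambda>z. ennreal (norm (L z) powr q) * indicator \<Omega> (snd z)) \<in> borel_measurable (lborel \<Otimes>\<^sub>M lborel)"
    using measurable_cong_sets[OF sets_lborel_pair refl] by blast
  then have "(\<lambda>\<xi>. \<integral>\<^sup>+s. ennreal (norm (L (\<xi>, s)) powr q) * indicator \<Omega> s \<partial>lborel) \<in> borel_measurable lborel"
    by (rule lborel.borel_measurable_nn_integral_fst[where f="\<lambda>z. ennreal (norm (L z) powr q) * indicator \<Omega> (snd z)", simplified])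
  then have "(\<lambda>\<xi>. \<integral>\<^sup>+s. ennreal (norm (L (\<xi>, s)) powr q) * indicator \<Omega> s \<partial>lborel) \<in> borel_measurable M"
    by (intro measurable_restrict_space1 measurable_completion) simp
  then show ?thesis by (simp add: row_integral_lborel[abs_def])
qed

lemma nn_integral_diff_eq_row_integral:
  fixes G :: "(real^'k) \<times> (real^'k) \<Rightarrow> real^'n^'m"
  assumes G: "G \<in> borel_measurable borel"
  shows "(\<integral>\<^sup>+z. ennreal (indicator (\<Omega>\<times>\<Omega>) z * norm (K_ext z - G z) powr q) \<partial>lebesgue)
       = (\<integral>\<^sup>+\<xi>. row_integral (\<lambda>z. K_borel z - G z) \<xi> \<partial>M)"
proof -
  let ?h = "\<lambda>z. ennreal (indicator (\<Omega>\<times>\<Omega>) z * norm (K_borel z - G z) powr q)"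
  note [measurable] = G
  have hm: "?h \<in> borel_measurable borel" by measurable
  have "(\<integral>\<^sup>+z. ennreal (indicator (\<Omega>\<times>\<Omega>) z * norm (K_ext z - G z) powr q) \<partial>lebesgue) = (\<integral>\<^sup>+z. ?h z \<partial>lebesgue)"
    using AE_completion[OF K_borel(2)] by (intro nn_integral_cong_AE) (auto elim: AE_mp)
  also have "\<dots> = (\<integral>\<^sup>+z. ?h z \<partial>lborel)" by (simp add: nn_integral_completion)
  also have "\<dots> = (\<integral>\<^sup>+z. ?h z \<partial>(lborel \<Otimes>\<^sub>M lborel))" by (subst lborel_prod) simp
  also have "\<dots> = (\<integral>\<^sup>+\<xi>. \<integral>\<^sup>+s. ?h (\<xi>, s) \<partial>lborel \<partial>lborel)"
    using hm measurable_cong_sets[OF sets_lborel_pair refl]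
    by (intro lborel.nn_integral_fst[symmetric]) blast
  also have "\<dots> = (\<integral>\<^sup>+\<xi>. row_integral (\<lambda>z. K_borel z - G z) \<xi> * indicator \<Omega> \<xi> \<partial>lborel)"
  proof (intro nn_integral_cong)
    fix \<xi>
    have "(\<integral>\<^sup>+s. ?h (\<xi>, s) \<partial>lborel) = (\<integral>\<^sup>+s. indicator \<Omega> \<xi> * (ennreal (norm (K_borel (\<xi>, s) - G (\<xi>, s)) powr q) * indicator \<Omega> s) \<partial>lborel)"
      by (intro nn_integral_cong) (auto simp: indicator_def)
    also have "\<dots> = indicator \<Omega> \<xi> * row_integral (\<lambda>z. K_borel z - G z) \<xi>"
      by (simp add: nn_integral_cmult_indicator nn_integral_cmult row_integral_lborel)
    finally show "(\<integral>\<^sup>+s. ?h (\<xi>, s) \<partial>lborel) = row_integral (\<lambda>z. K_borel z - G z) \<xi> * indicator \<Omega> \<xi>"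
      by (simp add: mult.commute)
  qed
  also have "\<dots> = (\<integral>\<^sup>+\<xi>. row_integral (\<lambda>z. K_borel z - G z) \<xi> \<partial>M)"
    by (rule nn_integral_lebesgue_on_eq[symmetric]) simp
  finally show ?thesis .
qed


lemma borel_measurable_M: "f \<in> borel_measurable borel \<Longrightarrow> f \<in> borel_measurable M"
  by (intro measurable_restrict_space1 measurable_completion) simp

lemma section_measurable:
  fixes L :: "(real^'k) \<times> (real^'k) \<Rightarrow> 'b::real_normed_vector"
  assumes "L \<in> borel_measurable borel"
  shows "(\<lambda>s. L (\<xi>, s)) \<in> borel_measurable M"
proof -
  have "Pair \<xi> \<in> borel_measurable borel"
    by (intro borel_measurable_continuous_onI continuous_intros)
  then have "(\<lambda>s. L (\<xi>, s)) \<in> borel_measurable borel"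
    using measurable_compose[OF _ assms, of "Pair \<xi>"] by simp
  then show ?thesis by (rule borel_measurable_M)
qed

lemma matrix_vector_mult_measurable:
  fixes A :: "real^'k \<Rightarrow> real^'n^'m" and y :: "real^'k \<Rightarrow> real^'n"
  assumes "A \<in> borel_measurable M" "y \<in> borel_measurable M"
  shows "(\<lambda>s. A s *v y s) \<in> borel_measurable M"
  using borel_measurable_bilinear[OF bilinear_matrix_vector_mult assms Omega_sets] by simp

lemma borel_measurable_M_AE_eq:
  fixes f g :: "real^'k \<Rightarrow> 'b::euclidean_space"
  assumes f: "f \<in> borel_measurable M" and ae: "AE s in M. f s = g s"
  shows "g \<in> borel_measurable M"
proof -
  have "(\<lambda>s. indicator \<Omega> s *\<^sub>R f s) \<in> borel_measurable lebesgue"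
    using f by (subst borel_measurable_restrict_space_iff[symmetric]) auto
  moreover have "AE s in lebesgue. indicator \<Omega> s *\<^sub>R f s = indicator \<Omega> s *\<^sub>R g s"
    using ae by (subst (asm) AE_restrict_space_iff) (auto elim!: AE_mp)
  ultimately have "(\<lambda>s. indicator \<Omega> s *\<^sub>R g s) \<in> borel_measurable lebesgue"
    by (rule borel_measurable_AE)
  then show ?thesis by (subst borel_measurable_restrict_space_iff) auto
qed

context
  fixes H :: "real^'k \<Rightarrow> real^'n^'m"
  assumes H: "H \<in> borel_measurable M"
begin

lemma nn_integral_norm_mult_le_Holder:
  assumes fin: "(\<integral>\<^sup>+s. ennreal (norm (H s) powr q) \<partial>M) < \<infinity>" and y: "y \<in> Bp p \<Omega> r"
  shows "(\<integral>\<^sup>+s. ennreal (norm (H s) * norm (y s)) \<partial>M)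
    \<le> ennreal (enn2real (\<integral>\<^sup>+s. ennreal (norm (H s) powr q) \<partial>M) powr (1/q) * r)"
proof -
  have fm: "(\<lambda>s. norm (y s)) \<in> borel_measurable M" using Bp_measurable[OF y] by measurable
  have gm: "(\<lambda>s. norm (H s)) \<in> borel_measurable M" using H by measurable
  have B: "(\<integral>\<^sup>+s. ennreal (norm (H s) powr q) \<partial>M) \<le> ennreal (enn2real (\<integral>\<^sup>+s. ennreal (norm (H s) powr q) \<partial>M))"
    using fin by (simp add: less_top)
  have "(\<integral>\<^sup>+s. ennreal (norm (y s) * norm (H s)) \<partial>M)
      \<le> ennreal ((r powr p) powr (1/p) * enn2real (\<integral>\<^sup>+s. ennreal (norm (H s) powr q) \<partial>M) powr (1/q))"
    by (rule nn_integral_Holder[OF fm gm _ _ p1 pq Bp_nn_integral_powr_le[OF y] B]) auto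
  also have "(r powr p) powr (1/p) = r" using r0 p1 by (simp add: powr_powr)
  finally show ?thesis by (simp add: mult.commute)
qed

lemma integrable_matrix_mult_Lq:
  assumes fin: "(\<integral>\<^sup>+s. ennreal (norm (H s) powr q) \<partial>M) < \<infinity>" and y: "y \<in> Bp p \<Omega> r"
  shows "integrable M (\<lambda>s. H s *v y s)"
    and "norm (integral\<^sup>L M (\<lambda>s. H s *v y s))
      \<le> enn2real (\<integral>\<^sup>+s. ennreal (norm (H s) powr q) \<partial>M) powr (1/q) * r"
proof -
  let ?N = "enn2real (\<integral>\<^sup>+s. ennreal (norm (H s) powr q) \<partial>M) powr (1/q) * r"
  have m: "(\<lambda>s. H s *v y s) \<in> borel_measurable M"
    by (rule matrix_vector_mult_measurable[OF H Bp_measurable[OF y]])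
  have le: "(\<integral>\<^sup>+s. ennreal (norm (H s *v y s)) \<partial>M) \<le> ennreal ?N"
    using nn_integral_norm_mult_le_Holder[OF fin y]
    by (rule order_trans[rotated]) (intro nn_integral_mono ennreal_leI norm_matrix_vector_mult_le)
  show "integrable M (\<lambda>s. H s *v y s)"
    using m le by (intro integrableI_bounded) (auto simp: top.not_eq_extremum dest: order.strict_trans1[OF _ ennreal_less_top])
  have "norm (integral\<^sup>L M (\<lambda>s. H s *v y s)) \<le> integral\<^sup>L M (\<lambda>s. norm (H s *v y s))"
    by (rule integral_norm_bound)
  also have "\<dots> \<le> ?N"
    using le by (intro integral_le_of_nn_integral_le) (auto simp: r0 less_imp_le)
  finally show "norm (integral\<^sup>L M (\<lambda>s. H s *v y s)) \<le> ?N" .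
qed

lemma integrable_bounded_matrix_mult:
  assumes Hb: "\<And>s. s \<in> \<Omega> \<Longrightarrow> norm (H s) \<le> Mg" and y: "y \<in> Bp p \<Omega> r"
  shows "integrable M (\<lambda>s. H s *v y s)"
proof -
  have m: "(\<lambda>s. H s *v y s) \<in> borel_measurable M"
    by (rule matrix_vector_mult_measurable[OF H Bp_measurable[OF y]])
  have "norm (H s *v y s) \<le> max Mg 0 * norm (y s)" if "s \<in> \<Omega>" for s
    using Hb[OF that] norm_matrix_vector_mult_le[of "H s" "y s"]
    by (smt (verit) mult_right_mono norm_ge_zero)
  then have "(\<integral>\<^sup>+s. ennreal (norm (H s *v y s)) \<partial>M) \<le> (\<integral>\<^sup>+s. ennreal (max Mg 0) * ennreal (norm (y s)) \<partial>M)"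
    by (intro nn_integral_mono) (simp add: ennreal_mult[symmetric] ennreal_leI)
  also have "\<dots> = ennreal (max Mg 0) * (\<integral>\<^sup>+s. ennreal (norm (y s)) \<partial>M)"
    using Bp_measurable[OF y] by (intro nn_integral_cmult) auto
  also have "\<dots> \<le> ennreal (max Mg 0) * ennreal (vol + r powr p)"
    by (intro mult_left_mono Bp_nn_integral_norm_le[OF y]) auto
  also have "\<dots> < \<infinity>" by (simp add: ennreal_mult_less_top)
  finally show ?thesis using m by (intro integrableI_bounded)
qed

end

lemma intop_split:
  assumes y: "y \<in> Bp p \<Omega> r" and sec: "AE s in M. K \<xi> s = K_borel (\<xi>, s)"
    and KLG: "\<And>z. K_borel z = L z + G z"
    and "integrable M (\<lambda>s. L (\<xi>, s) *v y s)" "integrable M (\<lambda>s. G (\<xi>, s) *v y s)"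
  shows "intop \<Omega> K y \<xi> = integral\<^sup>L M (\<lambda>s. L (\<xi>, s) *v y s) + integral\<^sup>L M (\<lambda>s. G (\<xi>, s) *v y s)"
proof -
  have m0: "(\<lambda>s. K_borel (\<xi>, s) *v y s) \<in> borel_measurable M"
    by (rule matrix_vector_mult_measurable[OF section_measurable[OF K_borel_measurable] Bp_measurable[OF y]])
  have ae: "AE s in M. K_borel (\<xi>, s) *v y s = K \<xi> s *v y s" using sec by eventually_elim simp
  have m1: "(\<lambda>s. K \<xi> s *v y s) \<in> borel_measurable M" by (rule borel_measurable_M_AE_eq[OF m0 ae])
  have "intop \<Omega> K y \<xi> = integral\<^sup>L M (\<lambda>s. K_borel (\<xi>, s) *v y s)"
    unfolding intop_def using ae m0 m1 by (intro integral_cong_AE) (auto elim: AE_mp)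
  also have "\<dots> = integral\<^sup>L M (\<lambda>s. L (\<xi>, s) *v y s + G (\<xi>, s) *v y s)"
    by (simp add: KLG matrix_vector_mult_add_rdistrib)
  also have "\<dots> = integral\<^sup>L M (\<lambda>s. L (\<xi>, s) *v y s) + integral\<^sup>L M (\<lambda>s. G (\<xi>, s) *v y s)"
    using assms(4,5) by (rule Bochner_Integration.integral_add)
  finally show ?thesis .
qed

lemma continuous_kernel_approx:
  assumes eta: "\<eta> > 0"
  shows "\<exists>G Mg. continuous_on UNIV G \<and> Mg > 0 \<and> (\<forall>\<xi>\<in>\<Omega>. \<forall>s\<in>\<Omega>. norm (G (\<xi>, s)) \<le> Mg)
     \<and> (\<integral>\<^sup>+\<xi>. row_integral (\<lambda>z. K_borel z - G z) \<xi> \<partial>M) \<le> ennreal \<eta>"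
proof -
  obtain G where Gc: "continuous_on UNIV G"
    and Gi: "(\<integral>\<^sup>+z. ennreal (indicator (\<Omega>\<times>\<Omega>) z * norm (K_ext z - G z) powr q) \<partial>lebesgue) \<le> ennreal \<eta>"
    using continuous_Lq_approx_on[OF K_ext_measurable less_imp_le[OF q_gt_1]
        nn_integral_K_ext_powr_finite Omega2_sets emeasure_Omega2 eta] by blast
  have "compact (G ` (\<Omega> \<times> \<Omega>))"
    using cpt Gc by (intro compact_continuous_image) (auto intro: continuous_on_subset compact_Times)
  then obtain Mg where Mg: "Mg > 0" "\<forall>v\<in>G ` (\<Omega> \<times> \<Omega>). norm v \<le> Mg"
    using compact_imp_bounded bounded_pos by metis
  have "(\<integral>\<^sup>+\<xi>. row_integral (\<lambda>z. K_borel z - G z) \<xi> \<partial>M) \<le> ennreal \<eta>"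
    using Gi nn_integral_diff_eq_row_integral[OF borel_measurable_continuous_onI[OF Gc]] by simp
  then show ?thesis using Gc Mg by blast
qed

lemma uniformly_continuous_second:
  assumes Gc: "continuous_on UNIV G" and om: "\<omega> > 0"
  obtains d where "d > 0"
    "\<And>\<xi> s c. \<xi> \<in> \<Omega> \<Longrightarrow> s \<in> \<Omega> \<Longrightarrow> c \<in> \<Omega> \<Longrightarrow> dist s c < d \<Longrightarrow> norm (G (\<xi>, s) - G (\<xi>, c)) \<le> \<omega>"
proof -
  have "uniformly_continuous_on (\<Omega> \<times> \<Omega>) G"
    using Gc cpt by (intro compact_uniformly_continuous) (auto intro: continuous_on_subset compact_Times)
  then obtain d where d: "d > 0" "\<And>z z'. z \<in> \<Omega>\<times>\<Omega> \<Longrightarrow> z' \<in> \<Omega>\<times>\<Omega> \<Longrightarrow> dist z' z < d \<Longrightarrow> dist (G z') (G z) < \<omega>"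
    using om unfolding uniformly_continuous_on_def by metis
  have "norm (G (\<xi>, s) - G (\<xi>, c)) \<le> \<omega>" if "\<xi> \<in> \<Omega>" "s \<in> \<Omega>" "c \<in> \<Omega>" "dist s c < d" for \<xi> s c
  proof -
    have "dist (\<xi>, s) (\<xi>, c) = dist s c" by (simp add: dist_Pair_Pair)
    then have "dist (G (\<xi>, s)) (G (\<xi>, c)) < \<omega>" using d(2)[of "(\<xi>, c)" "(\<xi>, s)"] that by auto
    then show ?thesis by (simp add: dist_norm)
  qed
  then show ?thesis using d(1) that by blast
qed
lemma partition_cell_dist_le:
  assumes P: "is_Delta_partition \<Omega> \<Delta> P" and "A \<in> P" "s \<in> A" "c \<in> A"
  shows "dist s c \<le> \<Delta>"
proof -
  have "bounded A" using partition_cell(2)[OF assms(1,2)] cpt by (meson bounded_subset compact_imp_bounded)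
  then have "dist s c \<le> diameter A" using assms(3,4) by (rule diameter_bounded_bound)
  also have "diameter A \<le> \<Delta>" using assms(1,2) by (auto simp: is_Delta_partition_def)
  finally show ?thesis .
qed

text \<open>On a cell of diameter \<open>\<le> \<Delta>\<close> the matrix function \<open>H\<close> is within \<open>\<omega>\<close> of its value at a point \<open>c\<close>
  of the cell, and \<open>H c\<close> can be taken out of the integral.\<close>

lemma norm_cell_integral_le_modulus:
  fixes H :: "real^'k \<Rightarrow> real^'n^'m" and w :: "real^'k \<Rightarrow> real^'n"
  assumes P: "is_Delta_partition \<Omega> \<Delta> P" and A: "A \<in> P"
    and Hb: "\<And>s. s \<in> \<Omega> \<Longrightarrow> norm (H s) \<le> Mg" and Mg: "0 \<le> Mg"
    and Hu: "\<And>s c. s \<in> \<Omega> \<Longrightarrow> c \<in> \<Omega> \<Longrightarrow> dist s c \<le> \<Delta> \<Longrightarrow> norm (H s - H c) \<le> \<omega>" and om: "0 \<le> \<omega>"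
    and wi: "integrable M w" and Hw: "integrable M (\<lambda>s. H s *v w s)"
  shows "norm (integral\<^sup>L M (\<lambda>s. indicator A s *\<^sub>R (H s *v w s)))
    \<le> \<omega> * integral\<^sup>L M (\<lambda>s. indicator A s * norm (w s)) + Mg * norm (integral\<^sup>L M (\<lambda>s. indicator A s *\<^sub>R w s))"
proof (cases "A = {}")
  case False
  then obtain c where c: "c \<in> A" by blast
  have AO: "A \<subseteq> \<Omega>" "A \<in> sets M" using partition_cell[OF P A] by auto
  define T where "T s = indicator A s *\<^sub>R (H s *v w s)" for s
  define U where "U s = H c *v (indicator A s *\<^sub>R w s)" for s
  have Aw: "integrable M (\<lambda>s. indicator A s *\<^sub>R w s)" using integrable_mult_indicator[OF AO(2) wi] .
  have Ti: "integrable M T" unfolding T_def using integrable_mult_indicator[OF AO(2) Hw] .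
  have Ui: "integrable M U"
    unfolding U_def by (rule integrable_const_matrix_mult[OF Aw])
  have TU: "norm (T s - U s) \<le> \<omega> * (indicator A s * norm (w s))" for s
  proof (cases "s \<in> A")
    case True
    have "T s - U s = (H s - H c) *v w s"
      using True by (simp add: T_def U_def matrix_vector_mult_diff_rdistrib)
    then have "norm (T s - U s) \<le> norm (H s - H c) * norm (w s)"
      by (simp add: norm_matrix_vector_mult_le)
    also have "\<dots> \<le> \<omega> * norm (w s)"
      using Hu[of s c] True c AO partition_cell_dist_le[OF P A True c] by (intro mult_right_mono) auto
    finally show ?thesis using True by simp
  qed (simp add: T_def U_def)
  have "integral\<^sup>L M T = integral\<^sup>L M (\<lambda>s. T s - U s) + integral\<^sup>L M U"
    using Ti Ui by simp
  then have "norm (integral\<^sup>L M T) \<le> norm (integral\<^sup>L M (\<lambda>s. T s - U s)) + norm (integral\<^sup>L M U)"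
    by (metis norm_triangle_ineq)
  moreover have "norm (integral\<^sup>L M (\<lambda>s. T s - U s)) \<le> \<omega> * integral\<^sup>L M (\<lambda>s. indicator A s * norm (w s))"
  proof -
    have "norm (integral\<^sup>L M (\<lambda>s. T s - U s)) \<le> integral\<^sup>L M (\<lambda>s. norm (T s - U s))"
      by (rule integral_norm_bound)
    also have "\<dots> \<le> integral\<^sup>L M (\<lambda>s. \<omega> * (indicator A s * norm (w s)))"
      using Ti Ui TU integrable_mult_indicator[OF AO(2) integrable_norm[OF wi]] by (intro integral_mono) auto
    finally show ?thesis by simp
  qed
  moreover have "norm (integral\<^sup>L M U) \<le> Mg * norm (integral\<^sup>L M (\<lambda>s. indicator A s *\<^sub>R w s))"
  proof -
    have "norm (integral\<^sup>L M U) \<le> norm (H c) * norm (integral\<^sup>L M (\<lambda>s. indicator A s *\<^sub>R w s))"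
      unfolding U_def by (rule norm_integral_const_matrix_mult_le[OF Aw])
    also have "\<dots> \<le> Mg * norm (integral\<^sup>L M (\<lambda>s. indicator A s *\<^sub>R w s))"
      using Hb[of c] c AO by (intro mult_right_mono) auto
    finally show ?thesis .
  qed
  ultimately show ?thesis unfolding T_def by linarith
qed (use om Mg in simp)

end

context discretisation begin

lemma x_disc_in_Bp: "x_disc \<in> Bp p \<Omega> r"
  by (rule subsetD[OF Bp_disc_subset_Bp[OF P unif_grid_nonneg] x_disc_in_Bp_disc])
    (use \<gamma> net in \<open>auto simp: is_finite_net_def\<close>)

lemma x_disc_integrable: "integrable M x_disc" using Bp_integrable[OF x_disc_in_Bp] .

lemma integral_norm_diff_le: "integral\<^sup>L M (\<lambda>s. norm (x s - x_disc s)) \<le> 2 * (vol + r powr p)"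
proof -
  have "integral\<^sup>L M (\<lambda>s. norm (x s - x_disc s)) \<le> integral\<^sup>L M (\<lambda>s. norm (x s) + norm (x_disc s))"
    using x_integrable x_disc_integrable by (intro integral_mono) (auto intro: norm_triangle_ineq4)
  also have "\<dots> = integral\<^sup>L M (\<lambda>s. norm (x s)) + integral\<^sup>L M (\<lambda>s. norm (x_disc s))"
    using x_integrable x_disc_integrable by (intro Bochner_Integration.integral_add) auto
  finally show ?thesis using integral_norm_Bp_le[OF x] integral_norm_Bp_le[OF x_disc_in_Bp] by simp
qed

lemma cell_int_diff:
  assumes A: "A \<in> P"
  shows "integral\<^sup>L M (\<lambda>s. indicator A s *\<^sub>R (x s - x_disc s)) = cell_meas A *\<^sub>R (cell_mean A - level A *\<^sub>R net_point A)"
proof -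
  have "integral\<^sup>L M (\<lambda>s. indicator A s *\<^sub>R x_disc s) = integral\<^sup>L M (\<lambda>s. indicator A s *\<^sub>R (level A *\<^sub>R net_point A))"
    by (intro Bochner_Integration.integral_cong refl) (simp add: indicator_def x_disc_on_cell[OF A])
  also have "\<dots> = cell_meas A *\<^sub>R (level A *\<^sub>R net_point A)"
    using integrable_indicator_cell[OF P A] integral_indicator_cell[OF P A] by (simp add: cell_meas_def)
  finally have "integral\<^sup>L M (\<lambda>s. indicator A s *\<^sub>R x_disc s) = cell_meas A *\<^sub>R (level A *\<^sub>R net_point A)" .
  moreover have "integral\<^sup>L M (\<lambda>s. indicator A s *\<^sub>R (x s - x_disc s))
      = cell_int A - integral\<^sup>L M (\<lambda>s. indicator A s *\<^sub>R x_disc s)"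
    using partition_cell[OF P A] x_integrable x_disc_integrable unfolding cell_int_def scaleR_diff_right
    by (intro Bochner_Integration.integral_diff integrable_mult_indicator) auto
  ultimately show ?thesis using cell_int_eq[OF A] by (simp add: algebra_simps)
qed

definition "error_bound \<omega> Mg
  = \<omega> * (2 * (vol + r powr p)) + Mg * (vol * (step + \<gamma> * \<sigma>) + 2 * r powr p / \<gamma> powr (p - 1))"

lemma error_bound_nonneg: "0 \<le> \<omega> \<Longrightarrow> 0 \<le> Mg \<Longrightarrow> 0 \<le> error_bound \<omega> Mg"
  unfolding error_bound_def using vol_nonneg step_pos \<gamma> \<sigma> r0 by (intro add_nonneg_nonneg mult_nonneg_nonneg) auto

lemma error_bound_le:
  assumes c: "c > 0" and Mg: "0 \<le> Mg" and om: "0 \<le> \<omega>"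
    and "\<omega> \<le> c / (4 * (2 * (vol + r powr p)) + 1)" "step \<le> c / (4 * (Mg * vol) + 1)"
      "\<sigma> \<le> c / (4 * (Mg * vol * \<gamma>) + 1)" "1 / \<gamma> powr (p - 1) \<le> c / (4 * (2 * Mg * r powr p) + 1)"
  shows "error_bound \<omega> Mg \<le> c"
proof -
  have "2 * (vol + r powr p) * \<omega> \<le> c / 4"
    using assms vol_nonneg by (intro mult_le_quarter) auto
  moreover have "(Mg * vol) * step \<le> c / 4"
    using assms vol_nonneg step_pos by (intro mult_le_quarter) auto
  moreover have "(Mg * vol * \<gamma>) * \<sigma> \<le> c / 4"
    using assms vol_nonneg \<gamma> \<sigma> by (intro mult_le_quarter) auto
  moreover have "(2 * Mg * r powr p) * (1 / \<gamma> powr (p - 1)) \<le> c / 4"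
    using assms by (intro mult_le_quarter) auto
  moreover have "error_bound \<omega> Mg = 2 * (vol + r powr p) * \<omega> + (Mg * vol) * step + (Mg * vol * \<gamma>) * \<sigma>
      + (2 * Mg * r powr p) * (1 / \<gamma> powr (p - 1))"
    by (simp add: error_bound_def algebra_simps)
  ultimately show ?thesis by linarith
qed

lemma continuous_part_estimate:
  fixes H :: "real^'k \<Rightarrow> real^'n^'m"
  assumes Hb: "\<And>s. s \<in> \<Omega> \<Longrightarrow> norm (H s) \<le> Mg" and Mg: "0 \<le> Mg"
    and Hu: "\<And>s c. s \<in> \<Omega> \<Longrightarrow> c \<in> \<Omega> \<Longrightarrow> dist s c \<le> \<Delta> \<Longrightarrow> norm (H s - H c) \<le> \<omega>" and om: "0 \<le> \<omega>"
    and ix: "integrable M (\<lambda>s. H s *v x s)" and id: "integrable M (\<lambda>s. H s *v x_disc s)"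
  shows "norm (integral\<^sup>L M (\<lambda>s. H s *v x s) - integral\<^sup>L M (\<lambda>s. H s *v x_disc s)) \<le> error_bound \<omega> Mg"
proof -
  define w where "w s = x s - x_disc s" for s
  have wi: "integrable M w" using x_integrable x_disc_integrable by (simp add: w_def[abs_def])
  have Hw: "integrable M (\<lambda>s. H s *v w s)"
    using Bochner_Integration.integrable_diff[OF ix id] by (simp add: w_def matrix_vector_mult_diff_distrib)
  have "integral\<^sup>L M (\<lambda>s. H s *v x s) - integral\<^sup>L M (\<lambda>s. H s *v x_disc s) = integral\<^sup>L M (\<lambda>s. H s *v w s)"
    using Bochner_Integration.integral_diff[OF ix id] by (simp add: w_def matrix_vector_mult_diff_distrib)
  also have "\<dots> = (\<Sum>A\<in>P. integral\<^sup>L M (\<lambda>s. indicator A s *\<^sub>R (H s *v w s)))"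
    by (rule integral_sum_partition[OF P Hw, symmetric])
  finally have "norm (integral\<^sup>L M (\<lambda>s. H s *v x s) - integral\<^sup>L M (\<lambda>s. H s *v x_disc s))
      \<le> (\<Sum>A\<in>P. norm (integral\<^sup>L M (\<lambda>s. indicator A s *\<^sub>R (H s *v w s))))"
    by (simp add: norm_sum)
  also have "\<dots> \<le> (\<Sum>A\<in>P. \<omega> * integral\<^sup>L M (\<lambda>s. indicator A s * norm (w s))
      + Mg * (cell_meas A * norm (cell_mean A - level A *\<^sub>R net_point A)))"
  proof (rule sum_mono)
    fix A assume A: "A \<in> P"
    have "norm (integral\<^sup>L M (\<lambda>s. indicator A s *\<^sub>R w s)) = cell_meas A * norm (cell_mean A - level A *\<^sub>R net_point A)"
      using cell_int_diff[OF A] cell_meas_nonneg[of A] by (simp add: w_def)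
    then show "norm (integral\<^sup>L M (\<lambda>s. indicator A s *\<^sub>R (H s *v w s)))
      \<le> \<omega> * integral\<^sup>L M (\<lambda>s. indicator A s * norm (w s)) + Mg * (cell_meas A * norm (cell_mean A - level A *\<^sub>R net_point A))"
      using norm_cell_integral_le_modulus[OF P A Hb Mg Hu om wi Hw] by simp
  qed
  also have "\<dots> = \<omega> * integral\<^sup>L M (\<lambda>s. norm (w s))
      + Mg * (\<Sum>A\<in>P. cell_meas A * norm (cell_mean A - level A *\<^sub>R net_point A))"
    using integral_sum_partition[OF P integrable_norm[OF wi]] by (simp add: sum.distrib sum_distrib_left[symmetric])
  also have "\<dots> \<le> error_bound \<omega> Mg"
    unfolding error_bound_def using integral_norm_diff_le sum_quantisation_error om Mg
    by (intro add_mono mult_left_mono) (auto simp: w_def)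
  finally show ?thesis .
qed

lemma norm_intop_diff_le:
  fixes L G :: "(real^'k) \<times> (real^'k) \<Rightarrow> real^'n^'m"
  assumes Lm: "L \<in> borel_measurable borel" and Gm: "G \<in> borel_measurable borel"
    and KLG: "\<And>z. K_borel z = L z + G z" and \<xi>: "\<xi> \<in> \<Omega>"
    and Phi: "row_integral L \<xi> < \<infinity>" and sec: "AE s in M. K \<xi> s = K_borel (\<xi>, s)"
    and Gb: "\<And>s. s \<in> \<Omega> \<Longrightarrow> norm (G (\<xi>, s)) \<le> Mg" and Mg: "0 \<le> Mg"
    and Gu: "\<And>s c. s \<in> \<Omega> \<Longrightarrow> c \<in> \<Omega> \<Longrightarrow> dist s c \<le> \<Delta> \<Longrightarrow> norm (G (\<xi>, s) - G (\<xi>, c)) \<le> \<omega>"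
    and om: "0 \<le> \<omega>"
  shows "norm (intop \<Omega> K x \<xi> - intop \<Omega> K x_disc \<xi>)
    \<le> 2 * r * enn2real (row_integral L \<xi>) powr (1/q) + error_bound \<omega> Mg"
proof -
  have Hm: "(\<lambda>s. L (\<xi>, s)) \<in> borel_measurable M" "(\<lambda>s. G (\<xi>, s)) \<in> borel_measurable M"
    using section_measurable Lm Gm by auto
  have fin: "(\<integral>\<^sup>+s. ennreal (norm (L (\<xi>, s)) powr q) \<partial>M) < \<infinity>"
    using Phi by (simp add: row_integral_def)
  note L_int = integrable_matrix_mult_Lq[OF Hm(1) fin]
  have G_int: "integrable M (\<lambda>s. G (\<xi>, s) *v y s)" if "y \<in> Bp p \<Omega> r" for y
    by (rule integrable_bounded_matrix_mult[OF Hm(2) _ that]) (rule Gb)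
  note split = intop_split[OF _ sec KLG]
  let ?LI = "\<lambda>y. integral\<^sup>L M (\<lambda>s. L (\<xi>, s) *v y s)"
  let ?GI = "\<lambda>y. integral\<^sup>L M (\<lambda>s. G (\<xi>, s) *v y s)"
  have "intop \<Omega> K x \<xi> - intop \<Omega> K x_disc \<xi> = (?LI x - ?LI x_disc) + (?GI x - ?GI x_disc)"
    using split[OF x L_int(1)[OF x] G_int[OF x]]
      split[OF x_disc_in_Bp L_int(1)[OF x_disc_in_Bp] G_int[OF x_disc_in_Bp]]
    by (simp add: algebra_simps)
  then have "norm (intop \<Omega> K x \<xi> - intop \<Omega> K x_disc \<xi>) \<le> norm (?LI x - ?LI x_disc) + norm (?GI x - ?GI x_disc)"
    by (simp add: norm_triangle_ineq)
  moreover have "norm (?LI x - ?LI x_disc) \<le> norm (?LI x) + norm (?LI x_disc)"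
    by (rule norm_triangle_ineq4)
  moreover have "norm (?LI x) \<le> enn2real (row_integral L \<xi>) powr (1/q) * r"
    using L_int(2)[OF x] by (simp add: row_integral_def)
  moreover have "norm (?LI x_disc) \<le> enn2real (row_integral L \<xi>) powr (1/q) * r"
    using L_int(2)[OF x_disc_in_Bp] by (simp add: row_integral_def)
  moreover have "norm (?GI x - ?GI x_disc) \<le> error_bound \<omega> Mg"
    by (rule continuous_part_estimate[where Mg = Mg and \<omega> = \<omega>])
      (use Gb Mg Gu om G_int x x_disc_in_Bp in auto)
  ultimately have "norm (intop \<Omega> K x \<xi> - intop \<Omega> K x_disc \<xi>)
      \<le> enn2real (row_integral L \<xi>) powr (1/q) * r + enn2real (row_integral L \<xi>) powr (1/q) * r + error_bound \<omega> Mg"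
    by linarith
  then show ?thesis by (simp add: algebra_simps)
qed

lemma integral_powr_diff_le:
  fixes G :: "(real^'k) \<times> (real^'k) \<Rightarrow> real^'n^'m" and Mg \<omega> \<eta> :: real
  assumes Gc: "continuous_on UNIV G"
    and Gb: "\<And>\<xi> s. \<xi> \<in> \<Omega> \<Longrightarrow> s \<in> \<Omega> \<Longrightarrow> norm (G (\<xi>, s)) \<le> Mg" and Mg: "0 \<le> Mg"
    and Gu: "\<And>\<xi> s c. \<xi> \<in> \<Omega> \<Longrightarrow> s \<in> \<Omega> \<Longrightarrow> c \<in> \<Omega> \<Longrightarrow> dist s c \<le> \<Delta> \<Longrightarrow> norm (G (\<xi>, s) - G (\<xi>, c)) \<le> \<omega>"
    and om: "0 \<le> \<omega>"
    and Ga: "(\<integral>\<^sup>+\<xi>. row_integral (\<lambda>z. K_borel z - G z) \<xi> \<partial>M) \<le> ennreal \<eta>" and eta: "0 \<le> \<eta>"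
  shows "integral\<^sup>L M (\<lambda>\<xi>. norm (intop \<Omega> K x \<xi> - intop \<Omega> K x_disc \<xi>) powr q)
      \<le> 2 powr q * ((2 * r) powr q * \<eta> + vol * error_bound \<omega> Mg powr q)"
proof -
  define L where "L z = K_borel z - G z" for z
  define C where "C = error_bound \<omega> Mg"
  have C0: "0 \<le> C" using error_bound_nonneg[OF om Mg] by (simp add: C_def)
  have Gm: "G \<in> borel_measurable borel" using Gc by (rule borel_measurable_continuous_onI)
  have Lm: "L \<in> borel_measurable borel" unfolding L_def[abs_def] using Gm by measurable
  have PhiM: "row_integral L \<in> borel_measurable M" by (rule row_integral_measurable[OF Lm])
  have Ga': "(\<integral>\<^sup>+\<xi>. row_integral L \<xi> \<partial>M) \<le> ennreal \<eta>" using Ga by (simp add: L_def[abs_def])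
  have "AE \<xi> in M. row_integral L \<xi> \<noteq> \<infinity>"
    using Ga' by (intro nn_integral_PInf_AE[OF PhiM]) (auto simp: top_unique dest: order_trans[OF _ Ga'])
  then have "AE \<xi> in M. ennreal (norm (intop \<Omega> K x \<xi> - intop \<Omega> K x_disc \<xi>) powr q)
      \<le> ennreal (2 powr q * (2 * r) powr q) * row_integral L \<xi> + ennreal (2 powr q * C powr q)"
    using K_borel_sections AE_space[of M]
  proof eventually_elim
    case (elim \<xi>)
    define \<phi> where "\<phi> = enn2real (row_integral L \<xi>)"
    have phi: "0 \<le> \<phi>" "ennreal \<phi> = row_integral L \<xi>" using elim by (simp_all add: \<phi>_def less_top)
    have "norm (intop \<Omega> K x \<xi> - intop \<Omega> K x_disc \<xi>) \<le> 2 * r * \<phi> powr (1/q) + C"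
      unfolding \<phi>_def C_def using elim Gb Gu Mg om
      by (intro norm_intop_diff_le[OF Lm Gm]) (auto simp: L_def top.not_eq_extremum)
    from ennreal_powr_le_if_le_root_add[OF _ this] show ?case
      using phi r0 C0 q_gt_1 by simp
  qed
  then have "(\<integral>\<^sup>+\<xi>. ennreal (norm (intop \<Omega> K x \<xi> - intop \<Omega> K x_disc \<xi>) powr q) \<partial>M)
      \<le> (\<integral>\<^sup>+\<xi>. ennreal (2 powr q * (2 * r) powr q) * row_integral L \<xi> + ennreal (2 powr q * C powr q) \<partial>M)"
    by (rule nn_integral_mono_AE)
  also have "\<dots> = ennreal (2 powr q * (2 * r) powr q) * (\<integral>\<^sup>+\<xi>. row_integral L \<xi> \<partial>M)
      + ennreal (2 powr q * C powr q) * ennreal vol"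
    using PhiM by (subst nn_integral_add) (auto simp: nn_integral_cmult emeasure_M_Omega)
  also have "\<dots> \<le> ennreal (2 powr q * (2 * r) powr q) * ennreal \<eta> + ennreal (2 powr q * C powr q) * ennreal vol"
    by (intro add_mono mult_left_mono Ga') auto
  also have "\<dots> = ennreal (2 powr q * ((2 * r) powr q * \<eta> + vol * C powr q))"
    using eta vol_nonneg by (simp add: ennreal_plus[symmetric] ennreal_mult[symmetric] algebra_simps del: ennreal_plus)
  finally show ?thesis unfolding C_def
    using eta vol_nonneg by (intro integral_le_of_nn_integral_le) auto
qed

lemma Lp_norm_intop_diff_le:
  fixes G :: "(real^'k) \<times> (real^'k) \<Rightarrow> real^'n^'m"
  assumes Gc: "continuous_on UNIV G"
    and Gb: "\<And>\<xi> s. \<xi> \<in> \<Omega> \<Longrightarrow> s \<in> \<Omega> \<Longrightarrow> norm (G (\<xi>, s)) \<le> Mg" and Mg: "0 \<le> Mg"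
    and Gu: "\<And>\<xi> s c. \<xi> \<in> \<Omega> \<Longrightarrow> s \<in> \<Omega> \<Longrightarrow> c \<in> \<Omega> \<Longrightarrow> dist s c \<le> \<Delta> \<Longrightarrow> norm (G (\<xi>, s) - G (\<xi>, c)) \<le> \<omega>"
    and om: "0 \<le> \<omega>"
    and Ga: "(\<integral>\<^sup>+\<xi>. row_integral (\<lambda>z. K_borel z - G z) \<xi> \<partial>M) \<le> ennreal \<eta>" and eta: "0 \<le> \<eta>"
    and C: "error_bound \<omega> Mg \<le> C"
    and budget: "2 powr q * ((2 * r) powr q * \<eta> + vol * C powr q) \<le> \<epsilon> powr q" and eps: "\<epsilon> > 0"
  shows "Lp_norm q \<Omega> (\<lambda>s. intop \<Omega> K x s - intop \<Omega> K x_disc s) \<le> \<epsilon>"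
proof (rule Lp_norm_le_if_integral_powr_le)
  have "2 powr q * ((2 * r) powr q * \<eta> + vol * error_bound \<omega> Mg powr q)
      \<le> 2 powr q * ((2 * r) powr q * \<eta> + vol * C powr q)"
    using C error_bound_nonneg[OF om Mg] q_gt_1 vol_nonneg
    by (intro mult_left_mono add_left_mono powr_mono2) auto
  moreover have "integral\<^sup>L M (\<lambda>\<xi>. norm (intop \<Omega> K x \<xi> - intop \<Omega> K x_disc \<xi>) powr q)
      \<le> 2 powr q * ((2 * r) powr q * \<eta> + vol * error_bound \<omega> Mg powr q)"
    by (rule integral_powr_diff_le[OF Gc _ Mg _ om Ga eta]) (use Gb Gu in auto)
  ultimately show "integral\<^sup>L M (\<lambda>\<xi>. norm (intop \<Omega> K x \<xi> - intop \<Omega> K x_disc \<xi>) powr q) \<le> \<epsilon> powr q"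
    using budget by linarith
qed (use q_gt_1 eps in auto)

end

context kernel_operator begin

text \<open>\<open>G\<close> and \<open>\<eta>\<close> are chosen so that the \<open>L\<^sub>q\<close>-error of \<open>K - G\<close> costs half of \<open>\<epsilon>\<^sup>q\<close>; the other
  half is spent on \<open>error_bound \<omega> Mg \<le> c\<close>, each of its four terms getting \<open>c/4\<close>, which forces
  \<open>\<gamma>\<close> to be so large that \<open>2 Mg r\<^sup>p / \<gamma>\<^sup>p\<^sup>-\<^sup>1 \<le> c/4\<close>.\<close>

lemma error_budget_le:
  assumes T: "T > 0"
  shows "2 powr q * ((2 * r) powr q * (T / (2 * 2 powr q * (2 * r) powr q))
      + vol * ((T / (2 * 2 powr q * (vol + 1))) powr (1/q)) powr q) \<le> T"
proof -
  have "((T / (2 * 2 powr q * (vol + 1))) powr (1/q)) powr q = T / (2 * 2 powr q * (vol + 1))"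
    using T vol_nonneg q_gt_1 by (simp add: powr_powr)
  then have "2 powr q * (vol * ((T / (2 * 2 powr q * (vol + 1))) powr (1/q)) powr q) = T * vol / (2 * (vol + 1))"
    using vol_nonneg by simp
  moreover have "2 powr q * ((2 * r) powr q * (T / (2 * 2 powr q * (2 * r) powr q))) = T / 2" using r0 by simp
  moreover have "T * vol / (2 * (vol + 1)) \<le> T / 2"
    using T vol_nonneg by (simp add: divide_le_eq field_simps)
  ultimately show ?thesis unfolding distrib_left by linarith
qed

lemma exists_discrete_approximant:
  assumes eps: "\<epsilon> > 0"
  obtains \<gamma> \<Delta>s \<delta>s \<sigma>s where "\<gamma> > 0" "\<Delta>s > 0" "\<delta>s > 0" "\<sigma>s > 0"
    "\<And>\<Delta> P a \<sigma> (Es :: (real^'n) set) x. 0 < \<Delta> \<Longrightarrow> \<Delta> < \<Delta>s \<Longrightarrow> is_Delta_partition \<Omega> \<Delta> P \<Longrightarrow>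
      a \<ge> 1 \<Longrightarrow> \<gamma> / real a < \<delta>s \<Longrightarrow> 0 < \<sigma> \<Longrightarrow> \<sigma> < \<sigma>s \<Longrightarrow> is_finite_net \<sigma> (sphere 0 1) Es \<Longrightarrow>
      x \<in> Bp p \<Omega> r \<Longrightarrow>
      \<exists>y\<in>Bp_disc p r P (unif_grid \<gamma> a) Es. Lp_norm q \<Omega> (\<lambda>s. intop \<Omega> K x s - intop \<Omega> K y s) \<le> \<epsilon>"
proof -
  define T where "T = \<epsilon> powr q"
  have T: "T > 0" using eps by (simp add: T_def)
  define \<eta> where "\<eta> = T / (2 * 2 powr q * (2 * r) powr q)"
  have eta: "\<eta> > 0" using T r0 by (simp add: \<eta>_def)
  obtain G Mg where Gc: "continuous_on UNIV G" and Mg: "Mg > 0"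
    and Gb: "\<forall>\<xi>\<in>\<Omega>. \<forall>s\<in>\<Omega>. norm (G (\<xi>, s)) \<le> Mg"
    and Ga: "(\<integral>\<^sup>+\<xi>. row_integral (\<lambda>z. K_borel z - G z) \<xi> \<partial>M) \<le> ennreal \<eta>"
    using continuous_kernel_approx[OF eta] by blast
  define c where "c = (T / (2 * 2 powr q * (vol + 1))) powr (1/q)"
  have c: "c > 0" using T vol_nonneg by (simp add: c_def)
  have rp: "0 \<le> r powr p" by simp
  define \<omega> where "\<omega> = c / (4 * (2 * (vol + r powr p)) + 1)"
  have om: "\<omega> > 0"
    unfolding \<omega>_def using c vol_nonneg rp by (intro divide_pos_pos add_nonneg_pos mult_nonneg_nonneg) auto
  obtain d where d: "d > 0"
    and Gu: "\<And>\<xi> s s'. \<xi> \<in> \<Omega> \<Longrightarrow> s \<in> \<Omega> \<Longrightarrow> s' \<in> \<Omega> \<Longrightarrow> dist s s' < d \<Longrightarrow> norm (G (\<xi>, s) - G (\<xi>, s')) \<le> \<omega>"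
    using uniformly_continuous_second[OF Gc om] by blast
  define b where "b = (4 * (2 * Mg * r powr p) + 1) / c"
  have b: "b > 0" unfolding b_def using c Mg rp by (intro divide_pos_pos add_nonneg_pos mult_nonneg_nonneg) auto
  define \<gamma> where "\<gamma> = b powr (1 / (p - 1))"
  have gam: "\<gamma> > 0" using b by (simp add: \<gamma>_def)
  have "\<gamma> powr (p - 1) = b" unfolding \<gamma>_def using b p1 by (simp add: powr_powr)
  then have gam_pow: "1 / \<gamma> powr (p - 1) = c / (4 * (2 * Mg * r powr p) + 1)" by (simp add: b_def)
  define \<delta>s where "\<delta>s = c / (4 * (Mg * vol) + 1)"
  define \<sigma>s where "\<sigma>s = c / (4 * (Mg * vol * \<gamma>) + 1)"
  have ds: "\<delta>s > 0" and ss: "\<sigma>s > 0" unfolding \<delta>s_def \<sigma>s_def using c Mg vol_nonneg gam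
    by (auto intro!: divide_pos_pos add_nonneg_pos mult_nonneg_nonneg)
  have budget: "2 powr q * ((2 * r) powr q * \<eta> + vol * c powr q) \<le> \<epsilon> powr q"
    unfolding \<eta>_def c_def T_def[symmetric] using T by (rule error_budget_le)
  show ?thesis
  proof (rule that[OF gam d ds ss])
    fix \<Delta> P a \<sigma> and Es :: "(real^'n) set" and x :: "real^'k \<Rightarrow> real^'n"
    assume H: "0 < \<Delta>" "\<Delta> < d" "is_Delta_partition \<Omega> \<Delta> P" "a \<ge> 1" "\<gamma> / real a < \<delta>s"
      "0 < \<sigma>" "\<sigma> < \<sigma>s" "is_finite_net \<sigma> (sphere 0 1) Es" "x \<in> Bp p \<Omega> r"
    interpret D: discretisation \<Omega> K p q r x P \<Delta> \<gamma> a \<sigma> Es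
      by unfold_locales (use H gam in auto)
    have "D.error_bound \<omega> Mg \<le> c"
      using H(5,7) c Mg om by (intro D.error_bound_le) (auto simp: \<omega>_def \<delta>s_def \<sigma>s_def gam_pow D.step_def)
    moreover have "\<And>\<xi> s s'. \<xi> \<in> \<Omega> \<Longrightarrow> s \<in> \<Omega> \<Longrightarrow> s' \<in> \<Omega> \<Longrightarrow> dist s s' \<le> \<Delta> \<Longrightarrow> norm (G (\<xi>, s) - G (\<xi>, s')) \<le> \<omega>"
      using Gu H(2) by force
    ultimately have "Lp_norm q \<Omega> (\<lambda>s. intop \<Omega> K x s - intop \<Omega> K D.x_disc s) \<le> \<epsilon>"
      using Gb Mg om eta by (intro D.Lp_norm_intop_diff_le[OF Gc _ _ _ _ Ga _ _ budget eps]) auto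
    then show "\<exists>y\<in>Bp_disc p r P (unif_grid \<gamma> a) Es. Lp_norm q \<Omega> (\<lambda>s. intop \<Omega> K x s - intop \<Omega> K y s) \<le> \<epsilon>"
      using D.x_disc_in_Bp_disc by blast
  qed
qed

lemma hausdorff_discretisation_le:
  assumes eps: "\<epsilon> > 0"
  shows "\<exists>\<gamma>s>0. \<exists>\<Delta>s>0. \<exists>\<delta>s>0. \<exists>\<sigma>s>0.
     \<forall>\<Delta> P a \<sigma> (Es :: (real^'n) set).
        0 < \<Delta> \<and> \<Delta> < \<Delta>s \<and> is_Delta_partition \<Omega> \<Delta> P
        \<and> a \<ge> 1 \<and> 0 < \<gamma>s / real a \<and> \<gamma>s / real a < \<delta>s
        \<and> 0 < \<sigma> \<and> \<sigma> < \<sigma>s \<and> is_finite_net \<sigma> (sphere 0 1) Es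
      \<longrightarrow> hausdorff_Lq q \<Omega> (intop \<Omega> K ` Bp p \<Omega> r)
            (intop \<Omega> K ` Bp_disc p r P (unif_grid \<gamma>s a) Es) \<le> ereal \<epsilon>"
proof -
  obtain \<gamma> \<Delta>s \<delta>s \<sigma>s where pos: "\<gamma> > 0" "\<Delta>s > 0" "\<delta>s > 0" "\<sigma>s > 0" and approx: "\<And>\<Delta> P a \<sigma> (Es :: (real^'n) set) x.
      0 < \<Delta> \<Longrightarrow> \<Delta> < \<Delta>s \<Longrightarrow> is_Delta_partition \<Omega> \<Delta> P \<Longrightarrow> a \<ge> 1 \<Longrightarrow> \<gamma> / real a < \<delta>s \<Longrightarrow>
      0 < \<sigma> \<Longrightarrow> \<sigma> < \<sigma>s \<Longrightarrow> is_finite_net \<sigma> (sphere 0 1) Es \<Longrightarrow> x \<in> Bp p \<Omega> r \<Longrightarrow>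
      \<exists>y\<in>Bp_disc p r P (unif_grid \<gamma> a) Es. Lp_norm q \<Omega> (\<lambda>s. intop \<Omega> K x s - intop \<Omega> K y s) \<le> \<epsilon>"
    using exists_discrete_approximant[OF eps] by blast
  have "hausdorff_Lq q \<Omega> (intop \<Omega> K ` Bp p \<Omega> r) (intop \<Omega> K ` Bp_disc p r P (unif_grid \<gamma> a) Es) \<le> ereal \<epsilon>"
    if H: "0 < \<Delta> \<and> \<Delta> < \<Delta>s \<and> is_Delta_partition \<Omega> \<Delta> P \<and> a \<ge> 1 \<and> 0 < \<gamma> / real a \<and> \<gamma> / real a < \<delta>s
      \<and> 0 < \<sigma> \<and> \<sigma> < \<sigma>s \<and> is_finite_net \<sigma> (sphere 0 1) Es" for \<Delta> P a \<sigma> and Es :: "(real^'n) set"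
  proof (rule hausdorff_Lq_image_le)
    show "Bp_disc p r P (unif_grid \<gamma> a) Es \<subseteq> Bp p \<Omega> r"
      using H pos by (intro Bp_disc_subset_Bp unif_grid_nonneg) (auto simp: is_finite_net_def)
    show "\<exists>y\<in>Bp_disc p r P (unif_grid \<gamma> a) Es. Lp_norm q \<Omega> (\<lambda>s. intop \<Omega> K x s - intop \<Omega> K y s) \<le> \<epsilon>"
      if "x \<in> Bp p \<Omega> r" for x
      by (rule approx[of \<Delta> P a \<sigma> Es x]) (use H that in auto)
  qed (use eps in simp)
  then show ?thesis using pos by blast
qed

end

theorem corollary1:
  fixes \<Omega> :: "(real^'k) set"
    and K :: "real^'k \<Rightarrow> real^'k \<Rightarrow> real^'n^'m"
    and p q r :: real
  assumes "compact \<Omega>"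
    and "p > 1" and "1 / p + 1 / q = 1" and "r > 0"
    and "(\<lambda>(\<xi>, s). K \<xi> s) \<in> borel_measurable (lebesgue_on (\<Omega> \<times> \<Omega>))"
    and "integrable (lebesgue_on (\<Omega> \<times> \<Omega>)) (\<lambda>(\<xi>, s). norm (K \<xi> s) powr q)"
  shows "\<forall>\<epsilon>>0. \<exists>\<gamma>s>0. \<exists>\<Delta>s>0. \<exists>\<delta>s>0. \<exists>\<sigma>s>0.
     \<forall>\<Delta> P a \<sigma> (Es :: (real^'n) set).
        0 < \<Delta> \<and> \<Delta> < \<Delta>s \<and> is_Delta_partition \<Omega> \<Delta> P
        \<and> a \<ge> 1 \<and> 0 < \<gamma>s / real a \<and> \<gamma>s / real a < \<delta>s
        \<and> 0 < \<sigma> \<and> \<sigma> < \<sigma>s \<and> is_finite_net \<sigma> (sphere 0 1) Es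
      \<longrightarrow> hausdorff_Lq q \<Omega> (intop \<Omega> K ` Bp p \<Omega> r)
            (intop \<Omega> K ` Bp_disc p r P (unif_grid \<gamma>s a) Es) \<le> ereal \<epsilon>"
proof -
  interpret kernel_operator \<Omega> K p q r using assms by unfold_locales auto
  show ?thesis by (intro allI impI hausdorff_discretisation_le)
qed

end
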